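(* Let $\mathcal{H}(T,A,\mu)$ be a Cauchy--de Branges space with $A$ of finite order. Then an entire function $f$ belongs to $\mathcal{H}(T,A,\mu)$ if and only if the following three conditions hold: (i) $\sum_n\dfrac{|f(t_n)|^2}{|A'(t_n)|^2\mu_n}<\infty$; (ii) there exist a set $E\subset(0,\infty)$ of zero linear density and $N>0$ such that $|f(z)|\le|z|^N|A(z)|$ for all $z$ with $|z|\notin E$ (and $|z|$ sufficiently large); (iii) there exists a set $\Omega\subset\mathbb{C}$ of positive upper area density, i.e. $\limsup_{R\to\infty}R^{-2}m_2(\Omega\cap D(0,R))>0$, such that $|f(z)|=o(|A(z)|)$ as $|z|\to\infty$, $z\in\Omega$. Moreover, for $f\in\mathcal{H}(T,A,\mu)$, $\|f\|^2=\sum_n\frac{|f(t_n)|^2}{|A'(t_n)|^2\mu_n}$.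
   Context: $T=\{t_n\}\subset\mathbb{C}$ pairwise distinct, $0\notin T$, $|t_n|\to\infty$. $A$ is an entire function with simple zeros whose zero set is exactly $T$; $\mu_n>0$ with $\sum_n\mu_n/(|t_n|^2+1)<\infty$; $\mathcal{H}(T,A,\mu)=\{f(z)=A(z)\sum_n\frac{a_n\mu_n^{1/2}}{z-t_n}: a\in\ell^2\}$ with $\|f\|=\|a\|_{\ell^2}$. A set $E\subset(0,\infty)$ has zero linear density if $|E\cap(0,R)|=o(R)$, $R\to\infty$. $m_2$ is planar Lebesgue measure, $D(0,R)$ the disc of radius $R$ about $0$. *)

theory Defs
  imports "HOL-Analysis.Analysis"
begin

text \<open>Standing assumptions on the data (T, A, mu) of a Cauchy--de Branges space.
  T is enumerated by an injective sequence t.\<close>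
definition cdb_data :: "(nat \<Rightarrow> complex) \<Rightarrow> (complex \<Rightarrow> complex) \<Rightarrow> (nat \<Rightarrow> real) \<Rightarrow> bool" where
  "cdb_data t A \<mu> \<longleftrightarrow>
     inj t \<and> (\<forall>n. t n \<noteq> 0) \<and> filterlim (\<lambda>n. norm (t n)) at_top sequentially \<and>
     A holomorphic_on UNIV \<and> {z. A z = 0} = range t \<and> (\<forall>n. deriv A (t n) \<noteq> 0) \<and>
     (\<forall>n. \<mu> n > 0) \<and> summable (\<lambda>n. \<mu> n / ((norm (t n))\<^sup>2 + 1))"

text \<open>a in l^2 represents f: f(z) = A(z) * sum_n a_n mu_n^(1/2) / (z - t_n) (for z not in T;
  f is entire so this determines f).\<close>
definition cdb_repr :: "(nat \<Rightarrow> complex) \<Rightarrow> (complex \<Rightarrow> complex) \<Rightarrow> (nat \<Rightarrow> real)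
    \<Rightarrow> (nat \<Rightarrow> complex) \<Rightarrow> (complex \<Rightarrow> complex) \<Rightarrow> bool" where
  "cdb_repr t A \<mu> a f \<longleftrightarrow>
     summable (\<lambda>n. (norm (a n))\<^sup>2) \<and>
     (\<forall>z. z \<notin> range t \<longrightarrow>
        summable (\<lambda>n. a n * complex_of_real (sqrt (\<mu> n)) / (z - t n)) \<and>
        f z = A z * (\<Sum>n. a n * complex_of_real (sqrt (\<mu> n)) / (z - t n)))"

definition cdb_space :: "(nat \<Rightarrow> complex) \<Rightarrow> (complex \<Rightarrow> complex) \<Rightarrow> (nat \<Rightarrow> real)
    \<Rightarrow> (complex \<Rightarrow> complex) set" where
  "cdb_space t A \<mu> = {f. f holomorphic_on UNIV \<and> (\<exists>a. cdb_repr t A \<mu> a f)}"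

definition finite_order :: "(complex \<Rightarrow> complex) \<Rightarrow> bool" where
  "finite_order A \<longleftrightarrow> (\<exists>\<rho>::real. \<exists>R. \<forall>z. norm z > R \<longrightarrow> norm (A z) \<le> exp (norm z powr \<rho>))"

definition zero_linear_density :: "real set \<Rightarrow> bool" where
  "zero_linear_density E \<longleftrightarrow> E \<in> sets lebesgue \<and>
     ((\<lambda>R. measure lebesgue (E \<inter> {0<..<R}) / R) \<longlongrightarrow> 0) at_top"

definition pos_upper_area_density :: "complex set \<Rightarrow> bool" where
  "pos_upper_area_density \<Omega> \<longleftrightarrow> \<Omega> \<in> sets lebesgue \<and>
     Limsup at_top (\<lambda>R::real. ereal (measure lebesgue (\<Omega> \<inter> ball 0 R) / R\<^sup>2)) > 0"

end

theory Submission
  imports Defs "HOL-Complex_Analysis.Complex_Analysis" "HOL-Computational_Algebra.Fundamental_Theorem_Algebra"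
begin

text \<open>An element of the space is \<open>A\<close> times the Cauchy transform
  \<open>S(z) = \<Sum>\<^sub>n a\<^sub>n \<mu>\<^sub>n\<^sup>1\<^sup>/\<^sup>2 / (z - t\<^sub>n)\<close>, and \<open>a\<^sub>n = f(t\<^sub>n) / (A'(t\<^sub>n) \<mu>\<^sub>n\<^sup>1\<^sup>/\<^sup>2)\<close> gives (i) and the norm identity.
  Since \<open>A\<close> has finite order, it has polynomially many zeros in discs, so the intervals of radius
  \<open>(1 + \<bar>t\<^sub>n\<bar>)\<^sup>-\<^sup>p\<close> around the \<open>\<bar>t\<^sub>n\<bar>\<close> have summable lengths; off their union \<open>S\<close> grows polynomially,
  which gives (ii). The majorant \<open>\<Sum>\<^sub>n \<bar>a\<^sub>n\<bar> \<mu>\<^sub>n\<^sup>1\<^sup>/\<^sup>2 / \<bar>z - t\<^sub>n\<bar>\<close> has mean \<open>o(1)\<close> over the discs \<open>D(0, R)\<close>, so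
  by Markov's inequality it is small on a set of positive area density, which gives (iii); for the
  same reason \<open>S\<close> cannot stay bounded below on any set of positive upper density.

  Conversely, let \<open>g\<close> be the element with \<open>a\<^sub>n = f(t\<^sub>n) / (A'(t\<^sub>n) \<mu>\<^sub>n\<^sup>1\<^sup>/\<^sup>2)\<close>. Then \<open>(f - g) / A\<close> is entire and
  equals \<open>f / A - S\<close>; by (ii) it is polynomially bounded on circles avoiding two sets of zero linear
  density, hence a polynomial, and by (iii) a nonzero polynomial would keep \<open>S\<close> bounded below on a set
  of positive upper density. So \<open>f = g\<close>.\<close>

section \<open>Entire functions\<close>

lemma holomorphic_on_UNIV_if_local:
  assumes "\<And>z. \<exists>U. open U \<and> z \<in> U \<and> f holomorphic_on U"
  shows "f holomorphic_on UNIV"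
proof -
  have "\<exists>f'. (f has_field_derivative f') (at z)" for z
  proof -
    obtain U where U: "open U" "z \<in> U" "f holomorphic_on U" using assms by blast
    then show ?thesis using holomorphic_on_open[OF U(1)] by blast
  qed
  then show ?thesis using holomorphic_on_open[of UNIV] by auto
qed

lemma holomorphic_quotient_at_simple_zeros:
  fixes F A :: "complex \<Rightarrow> complex"
  assumes F: "F holomorphic_on UNIV" and A: "A holomorphic_on UNIV"
    and zeros: "\<And>z. A z = 0 \<Longrightarrow> F z = 0 \<and> deriv A z \<noteq> 0"
  defines "Q \<equiv> (\<lambda>z. if A z = 0 then deriv F z / deriv A z else F z / A z)"
  shows "Q holomorphic_on UNIV"
proof (rule holomorphic_on_UNIV_if_local)
  fix w
  show "\<exists>U. open U \<and> w \<in> U \<and> Q holomorphic_on U"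
  proof (cases "A w = 0")
    case False
    define U where "U = UNIV \<inter> A -` (- {0})"
    have "open U" unfolding U_def
      using A by (intro continuous_open_preimage holomorphic_on_imp_continuous_on) auto
    moreover have "(\<lambda>z. F z / A z) holomorphic_on U"
      using F A by (intro holomorphic_intros) (auto simp: U_def intro: holomorphic_on_subset)
    then have "Q holomorphic_on U"
      by (rule holomorphic_transform) (simp add: Q_def U_def)
    ultimately show ?thesis using False by (auto simp: U_def)
  next
    case True
    define qF where "qF = (\<lambda>y. if y = w then deriv F w else (F y - F w) / (y - w))"
    define qA where "qA = (\<lambda>y. if y = w then deriv A w else (A y - A w) / (y - w))"
    have hF: "qF holomorphic_on UNIV" unfolding qF_def by (rule pole_lemma_open[OF F]) auto
    have hA: "qA holomorphic_on UNIV" unfolding qA_def by (rule pole_lemma_open[OF A]) auto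
    define U where "U = UNIV \<inter> qA -` (- {0})"
    have "open U" unfolding U_def
      using hA by (intro continuous_open_preimage holomorphic_on_imp_continuous_on) auto
    moreover have "w \<in> U" using zeros[OF True] by (simp add: U_def qA_def)
    moreover have "Q holomorphic_on U"
    proof (rule holomorphic_transform)
      show "(\<lambda>y. qF y / qA y) holomorphic_on U"
        using hF hA by (intro holomorphic_intros) (auto simp: U_def intro: holomorphic_on_subset)
    next
      fix y assume "y \<in> U"
      show "qF y / qA y = Q y"
      proof (cases "y = w")
        case False
        have "A y = qA y * (y - w)" "F y = qF y * (y - w)"
          using False True zeros[OF True] by (simp_all add: qA_def qF_def)
        then show ?thesis using False \<open>y \<in> U\<close> by (simp add: Q_def U_def)
      qed (use True in \<open>simp add: Q_def qF_def qA_def\<close>)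
    qed
    ultimately show ?thesis by blast
  qed
qed

text \<open>Unlike \<open>Liouville_polynomial\<close>, the growth bound is only required on circles of
  arbitrarily large radius.\<close>
lemma entire_polynomial_if_bounded_on_circles:
  fixes G :: "complex \<Rightarrow> complex"
  assumes G: "G holomorphic_on UNIV" and B: "B \<ge> 0"
    and circ: "\<And>R. \<exists>r\<ge>R. r > 0 \<and> (\<forall>z. norm z = r \<longrightarrow> norm (G z) \<le> B * r ^ n)"
  shows "G \<xi> = (\<Sum>k\<le>n. (deriv ^^ k) G 0 / fact k * \<xi> ^ k)"
proof -
  have vanish: "(deriv ^^ k) G 0 = 0" if k: "k > n" for k
  proof (rule ccontr)
    assume ne: "(deriv ^^ k) G 0 \<noteq> 0"
    define d where "d = norm ((deriv ^^ k) G 0)"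
    have d: "d > 0" using ne by (simp add: d_def)
    obtain r where r: "r \<ge> max 1 (fact k * B / d + 1)" "r > 0" "\<And>z. norm z = r \<Longrightarrow> norm (G z) \<le> B * r ^ n"
      using circ by blast
    have "d \<le> fact k * (B * r ^ n) / r ^ k"
      unfolding d_def
    proof (rule Cauchy_inequality)
      show "G holomorphic_on ball 0 r" using G by (rule holomorphic_on_subset) auto
      show "continuous_on (cball 0 r) G" using G holomorphic_on_imp_continuous_on continuous_on_subset by blast
      show "norm (G x) \<le> B * r ^ n" if "norm (0 - x) = r" for x using r(3)[of x] that by simp
    qed (use r in auto)
    also have "\<dots> \<le> fact k * B / r"
    proof -
      have r1: "r \<ge> 1" using r by simp
      have "r * r ^ n \<le> r ^ k" using r1 k power_increasing[of "n + 1" k r] by simp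
      then have "fact k * B * (r * r ^ n) \<le> fact k * B * r ^ k" using B by (intro mult_left_mono) auto
      then show ?thesis using r1 by (simp add: field_simps)
    qed
    also have "\<dots> < d"
    proof -
      have "fact k * B / d < r" using r by simp
      then show ?thesis using d r by (simp add: divide_less_eq mult.commute)
    qed
    finally show False by simp
  qed
  have "(\<lambda>k. (deriv ^^ k) G 0 / fact k * (\<xi> - 0) ^ k) sums G \<xi>"
    by (rule holomorphic_power_series[where r = "norm \<xi> + 1"]) (use G in \<open>auto intro: holomorphic_on_subset\<close>)
  moreover have "(\<lambda>k. (deriv ^^ k) G 0 / fact k * (\<xi> - 0) ^ k) sums (\<Sum>k\<le>n. (deriv ^^ k) G 0 / fact k * (\<xi> - 0) ^ k)"
    by (rule sums_finite) (auto simp: vanish not_le)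
  ultimately show ?thesis by (simp add: sums_unique2)
qed

lemma polynomial_bounded_below_at_infinity:
  fixes c :: "nat \<Rightarrow> complex"
  assumes "c j \<noteq> 0" "j \<le> n"
  shows "\<exists>\<delta>>0. \<exists>R. \<forall>z. norm z \<ge> R \<longrightarrow> norm (\<Sum>k\<le>n. c k * z ^ k) \<ge> \<delta>"
proof -
  define p where "p = (\<Sum>k\<le>n. monom (c k) k)"
  have pz: "poly p z = (\<Sum>k\<le>n. c k * z ^ k)" for z unfolding p_def by (simp add: poly_sum poly_monom)
  have "coeff p j = c j" unfolding p_def using assms by (simp add: coeff_sum)
  then have p0: "p \<noteq> 0" using assms by auto
  obtain a q where pq: "p = pCons a q" by (cases p)
  show ?thesis
  proof (cases "q = 0")
    case True
    then show ?thesis using pz pq p0 by (intro exI[of _ "norm a"]) auto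
  next
    case False
    obtain R where "\<forall>z. R \<le> norm z \<longrightarrow> 1 \<le> norm (poly (pCons a q) z)"
      using poly_infinity[OF False, of 1 a] by blast
    then show ?thesis using pz pq by (intro exI[of _ 1]) auto
  qed
qed

section \<open>Sets of zero linear density\<close>

lemma zero_linear_density_if_finite_measure:
  assumes E: "E \<in> sets borel" and fin: "emeasure lborel E < \<infinity>"
  shows "zero_linear_density E"
proof -
  have le: "measure lebesgue (E \<inter> {0<..<R}) \<le> measure lborel E" for R
  proof -
    have "E \<inter> {0<..<R} \<in> sets borel" using E by auto
    then have "measure lebesgue (E \<inter> {0<..<R}) = measure lborel (E \<inter> {0<..<R})" by simp
    also have "\<dots> \<le> measure lborel E"
      using E fin by (intro measure_mono_fmeasurable) (simp_all add: fmeasurable_def)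
    finally show ?thesis .
  qed
  have "((\<lambda>R. measure lebesgue (E \<inter> {0<..<R}) / R) \<longlongrightarrow> 0) at_top"
  proof (rule tendsto_sandwich[where f = "\<lambda>_. 0" and h = "\<lambda>R. measure lborel E / R"])
    show "\<forall>\<^sub>F R in at_top. 0 \<le> measure lebesgue (E \<inter> {0<..<R}) / R"
      using eventually_gt_at_top[of 0] by eventually_elim auto
    show "\<forall>\<^sub>F R in at_top. measure lebesgue (E \<inter> {0<..<R}) / R \<le> measure lborel E / R"
      using eventually_gt_at_top[of 0] by eventually_elim (use le in \<open>auto intro: divide_right_mono\<close>)
    show "((\<lambda>R. measure lborel E / R) \<longlongrightarrow> 0) at_top" by real_asymp
  qed auto
  then show ?thesis unfolding zero_linear_density_def using E by simp
qed

lemma zero_linear_density_Union_intervals: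
  fixes c \<delta> :: "nat \<Rightarrow> real"
  assumes "summable \<delta>" "\<And>n. \<delta> n > 0"
  shows "zero_linear_density ((\<Union>n. {c n - \<delta> n <..< c n + \<delta> n}) \<inter> {0<..})"
proof (rule zero_linear_density_if_finite_measure)
  have "emeasure lborel ((\<Union>n. {c n - \<delta> n <..< c n + \<delta> n}) \<inter> {0<..})
      \<le> emeasure lborel (\<Union>n. {c n - \<delta> n <..< c n + \<delta> n})"
    by (intro emeasure_mono) simp_all
  also have "\<dots> \<le> (\<Sum>n. emeasure lborel {c n - \<delta> n <..< c n + \<delta> n})"
    by (intro emeasure_subadditive_countably) auto
  also have "\<dots> = (\<Sum>n. ennreal (2 * \<delta> n))"
    using assms(2) by (simp add: less_imp_le)
  also have "\<dots> = ennreal (\<Sum>n. 2 * \<delta> n)"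
    using assms by (intro suminf_ennreal2) (auto intro: less_imp_le summable_mult)
  finally show "emeasure lborel ((\<Union>n. {c n - \<delta> n <..< c n + \<delta> n}) \<inter> {0<..}) < \<infinity>"
    unfolding infinity_ennreal_def using ennreal_less_top by (rule le_less_trans)
qed auto

lemma zero_linear_density_avoid:
  assumes E1: "zero_linear_density E1" and E2: "zero_linear_density E2"
  shows "\<exists>r>R0. r \<notin> E1 \<and> r \<notin> E2"
proof (rule ccontr)
  assume cover: "\<not> (\<exists>r>R0. r \<notin> E1 \<and> r \<notin> E2)"
  define m where "m E R = measure lebesgue (E \<inter> {0<..<R})" for E :: "real set" and R :: real
  have "\<forall>\<^sub>F R in at_top. m E R / R < 1/4" if "zero_linear_density E" for E
    using that unfolding zero_linear_density_def m_def by (intro order_tendstoD(2)[of _ 0]) auto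
  note this[OF E1] this[OF E2]
  then obtain M where M: "\<And>x. x \<ge> M \<Longrightarrow> m E1 x / x < 1/4 \<and> m E2 x / x < 1/4"
    by (metis (no_types, lifting) eventually_at_top_linorder eventually_conj)
  define R where "R = max (max M 1) (max R0 0)"
  have R: "R \<ge> 1" "2 * R \<ge> M" "R \<ge> R0" unfolding R_def by auto
  have small: "m E1 (2*R) < R / 2" "m E2 (2*R) < R / 2"
    using M[of "2*R"] R by (auto simp: divide_less_eq)
  have "E \<inter> {0<..<2*R} \<in> fmeasurable lebesgue" if "zero_linear_density E" for E
    using that fmeasurable_Int_fmeasurable[of "{0<..<2*R}" lebesgue E]
    by (simp add: zero_linear_density_def Int_commute)
  note sets = this[OF E1] this[OF E2]
  have "{R<..<2*R} \<subseteq> (E1 \<inter> {0<..<2*R}) \<union> (E2 \<inter> {0<..<2*R})"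
    using cover R by force
  then have "measure lebesgue {R<..<2*R} \<le> measure lebesgue ((E1 \<inter> {0<..<2*R}) \<union> (E2 \<inter> {0<..<2*R}))"
    using sets by (intro measure_mono_fmeasurable) auto
  also have "\<dots> \<le> m E1 (2*R) + m E2 (2*R)"
    unfolding m_def using sets by (intro measure_Un_le fmeasurableD)
  finally show False using small R by simp
qed

section \<open>Integrals of the inverse distance over discs\<close>

lemma emeasure_ball_complex: "r \<ge> 0 \<Longrightarrow> emeasure lborel (ball (c::complex) r) = ennreal (pi * r\<^sup>2)"
  using emeasure_ball[of r c] by (simp add: unit_ball_vol_numeral)

lemma emeasure_cball_complex: "r \<ge> 0 \<Longrightarrow> emeasure lborel (cball (c::complex) r) = ennreal (pi * r\<^sup>2)"
  using emeasure_cball[of r c] by (simp add: unit_ball_vol_numeral)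

lemma ball_complex_in_borel[measurable]: "ball (c::complex) r \<in> sets borel"
  by simp

lemma dyadic_scale_exists:
  fixes u R :: real
  assumes u: "0 < u" "u < R"
  obtains j :: nat where "R / 2^(j+1) \<le> u" "u < R / 2^j"
proof -
  have ex: "\<exists>k. R / 2^(k+1) \<le> u"
  proof -
    obtain n :: nat where n: "R / u < n" using reals_Archimedean2 by blast
    have "real n < 2^(n+1)" using less_exp[of "n+1"] by (metis add_lessD1 less_exp of_nat_less_numeral_power_cancel_iff)
    then have "R / u < 2^(n+1)" using n by linarith
    then have "R < 2^(n+1) * u" using u by (simp add: divide_less_eq)
    then have "R / 2^(n+1) \<le> u" by (simp add: divide_le_eq mult.commute)
    then show ?thesis by blast
  qed
  define j where "j = (LEAST k. R / 2^(k+1) \<le> u)"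
  have j1: "R / 2^(j+1) \<le> u" unfolding j_def using ex by (rule LeastI_ex)
  have j2: "u < R / 2^j"
  proof (cases j)
    case 0 then show ?thesis using u by simp
  next
    case (Suc i)
    then have "\<not> R / 2^(i+1) \<le> u" unfolding j_def using not_less_Least[of i "\<lambda>k. R / 2^(k+1) \<le> u"]
      by (simp add: j_def)
    then show ?thesis using Suc by simp
  qed
  show ?thesis using j1 j2 by (rule that)
qed

lemma inverse_dist_le_dyadic_sum:
  fixes t0 z :: complex
  assumes R: "R > 0"
  shows "ennreal (1 / norm (z - t0)) \<le> ennreal (1/R) + (\<Sum>k. ennreal (2^(k+1) / R) * indicator (ball t0 (R / 2^k)) z)"
proof -
  define u where "u = norm (z - t0)"
  show ?thesis
  proof (cases "u < R \<and> u > 0")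
    case False
    then have "1 / u \<le> 1 / R" using R by (auto simp: u_def frac_le)
    then have "ennreal (1 / u) \<le> ennreal (1/R)" by (rule ennreal_leI)
    also have "\<dots> \<le> ennreal (1/R) + (\<Sum>k. ennreal (2^(k+1) / R) * indicator (ball t0 (R / 2^k)) z)" by simp
    finally show ?thesis by (simp add: u_def)
  next
    case True
    then obtain j where j1: "R / 2^(j+1) \<le> u" and j2: "u < R / 2^j"
      using dyadic_scale_exists by blast
    have zin: "z \<in> ball t0 (R / 2^j)" using j2 by (simp add: u_def dist_norm norm_minus_commute)
    have "1 / u \<le> 2^(j+1) / R"
    proof -
      have "R \<le> 2^(j+1) * u" using j1 by (simp add: divide_le_eq mult.commute)
      then show ?thesis using True R by (simp add: field_simps)
    qed
    then have "ennreal (1/u) \<le> ennreal (2^(j+1) / R) * indicator (ball t0 (R / 2^j)) z"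
      using zin by (simp add: ennreal_leI)
    also have "\<dots> \<le> (\<Sum>k. ennreal (2^(k+1) / R) * indicator (ball t0 (R / 2^k)) z)"
      using sum_le_suminf[OF summableI, of "{j}" "\<lambda>k. ennreal (2^(k+1) / R) * indicator (ball t0 (R / 2^k)) z"]
      by (simp only: sum.insert finite.emptyI empty_iff not_False_eq_True sum.empty add_0_right)
        (blast intro: zero_le finite.intros)
    also have "\<dots> \<le> ennreal (1/R) + (\<Sum>k. ennreal (2^(k+1) / R) * indicator (ball t0 (R / 2^k)) z)" by simp
    finally show ?thesis by (simp add: u_def)
  qed
qed

lemma nn_integral_dyadic_balls:
  fixes t0 :: complex
  assumes R: "R > 0"
  shows "(\<integral>\<^sup>+ (z::complex). (\<Sum>k. ennreal (2^(k+1) / R) * indicator (ball t0 (R / 2^k)) z) \<partial>lborel) = ennreal (4 * pi * R)"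
proof -
  have "(\<integral>\<^sup>+ (z::complex). ennreal (2^(k+1) / R) * indicator (ball t0 (R / 2^k)) z \<partial>lborel) = ennreal (2 * pi * R * (1/2)^k)"
    for k :: nat
  proof -
    have "(\<integral>\<^sup>+ (z::complex). ennreal (2^(k+1) / R) * indicator (ball t0 (R / 2^k)) z \<partial>lborel)
        = ennreal (2^(k+1) / R * (pi * (R / 2^k)\<^sup>2))"
      using R by (simp add: nn_integral_cmult_indicator emeasure_ball_complex ennreal_mult'[symmetric])
    also have "2^(k+1) / R * (pi * (R / 2^k)\<^sup>2) = 2 * pi * R * (1/2)^k"
      using R by (simp add: power2_eq_square field_simps power_add)
    finally show ?thesis .
  qed
  moreover have "(\<lambda>k. 2 * pi * R * (1/2::real)^k) sums (4 * pi * R)"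
    using sums_mult[OF geometric_sums[of "1/2::real"], of "2 * pi * R"] by (simp add: mult_ac)
  ultimately show ?thesis
    using R by (subst nn_integral_suminf) (auto intro: suminf_ennreal_eq)
qed

lemma nn_integral_inverse_dist_ball_le_linear:
  fixes t0 :: complex
  assumes R: "R > 0"
  shows "(\<integral>\<^sup>+ (z::complex). ennreal (1 / norm (z - t0)) * indicator (ball 0 R) z \<partial>lborel) \<le> ennreal (5 * pi * R)"
proof -
  have "(\<integral>\<^sup>+ (z::complex). ennreal (1 / norm (z - t0)) * indicator (ball 0 R) z \<partial>lborel)
      \<le> (\<integral>\<^sup>+ (z::complex). ennreal (1/R) * indicator (ball 0 R) z
            + (\<Sum>k. ennreal (2^(k+1) / R) * indicator (ball t0 (R / 2^k)) z) \<partial>lborel)"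
  proof (rule nn_integral_mono)
    fix z :: complex
    show "ennreal (1 / norm (z - t0)) * indicator (ball 0 R) z
        \<le> ennreal (1/R) * indicator (ball 0 R) z + (\<Sum>k. ennreal (2^(k+1) / R) * indicator (ball t0 (R / 2^k)) z)"
      using inverse_dist_le_dyadic_sum[OF R, of z t0] by (cases "z \<in> ball 0 R") simp_all
  qed
  also have "\<dots> = (\<integral>\<^sup>+ (z::complex). ennreal (1/R) * indicator (ball 0 R) z \<partial>lborel)
      + (\<integral>\<^sup>+ (z::complex). (\<Sum>k. ennreal (2^(k+1) / R) * indicator (ball t0 (R / 2^k)) z) \<partial>lborel)"
    by (rule nn_integral_add) measurable
  also have "\<dots> = ennreal (pi * R) + ennreal (4 * pi * R)"
    unfolding nn_integral_dyadic_balls[OF R] using R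
    by (simp add: nn_integral_cmult_indicator emeasure_ball_complex ennreal_mult'[symmetric] power2_eq_square)
  also have "\<dots> = ennreal (5 * pi * R)"
    using R by (simp add: ennreal_plus[symmetric] del: ennreal_plus)
  finally show ?thesis .
qed

lemma nn_integral_inverse_dist_ball_le:
  fixes t0 :: complex
  assumes R: "R > 0"
  shows "(\<integral>\<^sup>+ (z::complex). ennreal (1 / norm (z - t0)) * indicator (ball 0 R) z \<partial>lborel) \<le> ennreal (15 * pi * R\<^sup>2 / (R + norm t0))"
proof (cases "norm t0 > 2 * R")
  case True
  have "ennreal (1 / norm (z - t0)) * indicator (ball 0 R) z \<le> ennreal (3 / (R + norm t0)) * indicator (ball 0 R) z"
    for z :: complex
  proof (cases "z \<in> ball 0 R")
    case True
    then have le: "R + norm t0 \<le> 3 * norm (z - t0)"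
      using norm_triangle_ineq2[of t0 z] \<open>norm t0 > 2 * R\<close> by (simp add: norm_minus_commute)
    moreover have "R + norm t0 > 0" using R by (simp add: add_pos_nonneg)
    ultimately have "1 / norm (z - t0) \<le> 3 / (R + norm t0)"
      by (simp add: divide_simps mult.commute)
    then show ?thesis using True by (simp add: ennreal_leI)
  qed simp
  note pw = this
  have "(\<integral>\<^sup>+ (z::complex). ennreal (1 / norm (z - t0)) * indicator (ball 0 R) z \<partial>lborel)
      \<le> (\<integral>\<^sup>+ (z::complex). ennreal (3 / (R + norm t0)) * indicator (ball 0 R) z \<partial>lborel)"
    by (rule nn_integral_mono) (rule pw)
  also have "\<dots> = ennreal (3 * pi * R\<^sup>2 / (R + norm t0))"
    using R by (simp add: nn_integral_cmult_indicator emeasure_ball_complex ennreal_mult'[symmetric] add_pos_nonneg)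
  also have "\<dots> \<le> ennreal (15 * pi * R\<^sup>2 / (R + norm t0))"
    using R by (intro ennreal_leI divide_right_mono) (auto simp: add_pos_nonneg)
  finally show ?thesis .
next
  case False
  have "5 * pi * R * (R + norm t0) \<le> 5 * pi * R * (3 * R)"
    using R False by (intro mult_left_mono) auto
  then have "5 * pi * R \<le> 15 * pi * R\<^sup>2 / (R + norm t0)"
    using R by (simp add: le_divide_eq add_pos_nonneg power2_eq_square mult_ac)
  then show ?thesis
    using nn_integral_inverse_dist_ball_le_linear[OF R, of t0] ennreal_leI order_trans by blast
qed

lemma tendsto_const_div_add_at_top: "((\<lambda>R::real. c / (R + s)) \<longlongrightarrow> 0) at_top"
  by real_asymp

lemma inverse_power_le_dyadic_sum:
  fixes s :: real
  assumes s: "1 \<le> s" "s < 2 ^ J"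
  shows "1 / s ^ k \<le> (\<Sum>j<J. if s \<le> 2 ^ (j+1) then 1 / 2 ^ (j * k) else 0)"
proof -
  have ex: "s \<le> 2 ^ ((J - 1) + 1)"
    using s by (cases J) auto
  define j0 where "j0 = (LEAST j. s \<le> 2 ^ (j+1))"
  have up: "s \<le> 2 ^ (j0 + 1)" unfolding j0_def using ex by (rule LeastI)
  have "J > 0" using s by (cases J) auto
  then have j0J: "j0 < J" using Least_le[of "\<lambda>j. s \<le> 2 ^ (j+1)", OF ex] by (simp add: j0_def)
  have lo: "2 ^ j0 \<le> s"
  proof (cases j0)
    case 0 then show ?thesis using s by simp
  next
    case (Suc i)
    then have "\<not> s \<le> 2 ^ (i + 1)"
      using not_less_Least[of i "\<lambda>j. s \<le> 2 ^ (j+1)"] by (simp add: j0_def)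
    then show ?thesis using Suc by simp
  qed
  have "1 / s ^ k \<le> 1 / (2 ^ j0) ^ k"
    using lo s by (intro divide_left_mono power_mono mult_pos_pos zero_less_power) auto
  also have "\<dots> = (if s \<le> 2 ^ (j0+1) then 1 / 2 ^ (j0 * k) else 0)"
    using up by (simp add: power_mult)
  also have "\<dots> \<le> (\<Sum>j<J. if s \<le> 2 ^ (j+1) then 1 / 2 ^ (j * k) else 0)"
    using j0J by (intro member_le_sum) auto
  finally show ?thesis .
qed

text \<open>For \<open>s \<ge> 2 r\<close> the bound \<open>\<bar>r - s\<bar> \<le> u\<close> suffices, otherwise \<open>(s + 1)\<^sup>-\<^sup>p \<le> u\<close> does.\<close>
lemma square_plus_one_le_far:
  fixes r s u :: real
  assumes r: "r \<ge> 1" and s: "s \<ge> 0" and rs: "\<bar>r - s\<bar> \<le> u" and far: "1 / (s + 1) ^ p \<le> u"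
  shows "s\<^sup>2 + 1 \<le> u\<^sup>2 * (5 + (2*r+1) ^ (2*p+2))"
proof (cases "s \<ge> 2 * r")
  case True
  then have "u \<ge> s / 2" using rs r by linarith
  then have "u\<^sup>2 \<ge> (s/2)\<^sup>2" using r True by (intro power_mono) auto
  then have u4: "u\<^sup>2 \<ge> s\<^sup>2 / 4" by (simp add: power_divide)
  have "s\<^sup>2 \<ge> 2\<^sup>2" using True r by (intro power_mono) auto
  then have "s\<^sup>2 + 1 \<le> 5 * u\<^sup>2" using u4 by simp
  also have "\<dots> \<le> u\<^sup>2 * (5 + (2*r+1) ^ (2*p+2))"
    using r by (simp add: algebra_simps)
  finally show ?thesis .
next
  case False
  have "1 / (2*r+1)^p \<le> 1 / (s + 1)^p"
    using False r s by (intro divide_left_mono power_mono mult_pos_pos) auto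
  then have "1 / (2*r+1)^p \<le> u" using far by linarith
  then have "1 \<le> u * (2*r+1)^p" using r by (simp add: divide_le_eq mult.commute)
  then have "1 \<le> (u * (2*r+1)^p)\<^sup>2" by (simp add: one_le_power)
  then have one: "1 \<le> u\<^sup>2 * (2*r+1)^(2*p)" by (simp add: power_mult_distrib power_mult mult.commute)
  have "s\<^sup>2 \<le> (2*r)\<^sup>2" using False s by (intro power_mono) auto
  then have "s\<^sup>2 + 1 \<le> (2*r+1)\<^sup>2" using r by (simp add: power2_eq_square algebra_simps)
  also have "\<dots> \<le> (2*r+1)\<^sup>2 * (u\<^sup>2 * (2*r+1)^(2*p))"
    using one by (simp add: mult_le_cancel_left1)
  also have "\<dots> = u\<^sup>2 * (2*r+1)^(2*p+2)" by (simp add: power_add mult_ac power2_eq_square)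
  also have "\<dots> \<le> u\<^sup>2 * (5 + (2*r+1) ^ (2*p+2))" by (intro mult_left_mono) auto
  finally show ?thesis .
qed

lemma half_affine_bound_le_powr:
  fixes L W r :: real
  assumes L: "L \<ge> 0" and W: "W \<ge> 0" and r: "r \<ge> 1" "L + 5 * W + W * 3 ^ q \<le> r"
  shows "(L + W * (5 + (2*r+1)^q)) / 2 \<le> r powr (real (q + 1))"
proof -
  have "(2*r+1)^q \<le> (3*r)^q" using r by (intro power_mono) auto
  then have a: "(2*r+1)^q \<le> 3^q * r^q" by (simp add: power_mult_distrib)
  have rq: "r^q \<ge> 1" using r by (simp add: one_le_power)
  have "(L + W * (5 + (2*r+1)^q)) / 2 \<le> L + 5 * W + W * (2*r+1)^q"
    using L W r by (simp add: algebra_simps)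
  also have "\<dots> \<le> L * r^q + 5 * W * r^q + W * (3^q * r^q)"
    using a rq L W by (intro add_mono mult_left_mono) (auto simp: mult_le_cancel_left1)
  also have "\<dots> = (L + 5 * W + W * 3^q) * r^q" by (simp add: algebra_simps)
  also have "\<dots> \<le> r * r^q" using r by (intro mult_right_mono) auto
  also have "\<dots> = r powr (real (q + 1))" using r powr_realpow[of r "q + 1"] by simp
  finally show ?thesis .
qed

lemma dyadic_power_ratio: "C * (2^(j+1))^K / 2 ^ (j * (K+2)) = C * 2^K * (1/4::real)^j"
proof -
  have "(2::real)^(j * (K+2)) = 2^(j*K) * (2^j * 2^j)"
    by (simp add: power_add power_mult algebra_simps)
  also have "(2::real)^j * 2^j = 4^j" by (simp add: power_mult_distrib[symmetric])
  finally have "(2::real)^(j * (K+2)) = 2^(j*K) * 4^j" .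
  moreover have "((2::real)^(j+1))^K = 2^(j*K) * 2^K"
    by (simp add: power_mult[symmetric] add_mult_distrib power_add)
  ultimately show ?thesis by (simp add: power_one_over)
qed

section \<open>The Cauchy transform\<close>

locale cdb =
  fixes t :: "nat \<Rightarrow> complex" and A :: "complex \<Rightarrow> complex" and \<mu> :: "nat \<Rightarrow> real"
  assumes data: "cdb_data t A \<mu>"
begin

lemma inj_t: "inj t" using data by (simp add: cdb_data_def)
lemma t_nonzero: "t n \<noteq> 0" using data by (simp add: cdb_data_def)
lemma norm_t_tendsto: "filterlim (\<lambda>n. norm (t n)) at_top sequentially" using data by (simp add: cdb_data_def)
lemma A_holomorphic: "A holomorphic_on UNIV" using data by (simp add: cdb_data_def)
lemma A_zero_iff: "A z = 0 \<longleftrightarrow> z \<in> range t"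
proof -
  have "{z. A z = 0} = range t" using data by (simp add: cdb_data_def)
  then show ?thesis by blast
qed
lemma A_t: "A (t n) = 0" using A_zero_iff by auto
lemma A_0_nonzero: "A 0 \<noteq> 0" using A_zero_iff t_nonzero by (metis imageE)
lemma deriv_A_t_nonzero: "deriv A (t n) \<noteq> 0" using data by (simp add: cdb_data_def)
lemma mu_pos: "\<mu> n > 0" using data by (simp add: cdb_data_def)

definition weight :: "nat \<Rightarrow> real" where "weight n = \<mu> n / ((norm (t n))\<^sup>2 + 1)"
lemma summable_weight: "summable weight" using data unfolding weight_def[abs_def] by (simp add: cdb_data_def)
lemma weight_pos: "weight n > 0" using mu_pos[of n] unfolding weight_def by (intro divide_pos_pos) (auto intro: add_nonneg_pos)
lemma mu_eq_weight: "\<mu> n = weight n * ((norm (t n))\<^sup>2 + 1)"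
proof -
  have "(norm (t n))\<^sup>2 + 1 > 0" by (simp add: add_nonneg_pos)
  then show ?thesis unfolding weight_def by simp
qed

lemma finite_nodes_in_disc: "finite {n. norm (t n) \<le> r}"
proof -
  have "\<forall>\<^sub>F n in sequentially. norm (t n) > r"
    using norm_t_tendsto by (simp add: filterlim_at_top_dense)
  then obtain N where "\<And>n. n \<ge> N \<Longrightarrow> norm (t n) > r" by (auto simp: eventually_sequentially)
  then have "{n. norm (t n) \<le> r} \<subseteq> {..<N}" by (force simp: not_le)
  then show ?thesis by (rule finite_subset) auto
qed

lemma nodes_bounded_away:
  assumes "\<And>n. n \<in> J \<Longrightarrow> t n \<noteq> z"
  shows "\<exists>d>0. \<forall>n\<in>J. d \<le> norm (z - t n)"
proof -
  define F where "F = {n\<in>J. norm (t n) \<le> norm z + 1}"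
  have fF: "finite F" unfolding F_def by (rule finite_subset[OF _ finite_nodes_in_disc]) auto
  define d where "d = Min (insert 1 ((\<lambda>n. norm (z - t n)) ` F))"
  have d_pos: "d > 0" unfolding d_def using fF assms by (subst Min_gr_iff) (auto simp: F_def)
  have "d \<le> norm (z - t n)" if "n \<in> J" for n
  proof (cases "n \<in> F")
    case True then show ?thesis unfolding d_def using fF by (intro Min_le) auto
  next
    case False
    then have "norm (t n) > norm z + 1" using that by (auto simp: F_def)
    moreover have "norm (t n) \<le> norm z + norm (z - t n)" using norm_triangle_ineq2[of "t n" z] by (simp add: norm_minus_commute)
    moreover have "d \<le> 1" unfolding d_def using fF by (intro Min_le) auto
    ultimately show ?thesis by linarith
  qed
  then show ?thesis using d_pos by blast
qed

lemma mu_div_dist_le: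
  assumes "d > 0" "d \<le> norm (z - t n)" "norm z \<le> \<rho>"
  shows "\<mu> n / (norm (z - t n))\<^sup>2 \<le> weight n * (2 + (2*\<rho>\<^sup>2 + 1) / d\<^sup>2)"
proof -
  define u where "u = norm (z - t n)"
  have u: "u \<ge> d" "u > 0" using assms by (auto simp: u_def)
  have "norm (t n) \<le> norm z + u" unfolding u_def using norm_triangle_ineq2[of "t n" z] by (simp add: norm_minus_commute)
  then have "norm (t n) \<le> \<rho> + u" using assms(3) by linarith
  then have "(norm (t n))\<^sup>2 \<le> (\<rho> + u)\<^sup>2" by (intro power_mono) auto
  also have "\<dots> \<le> 2*\<rho>\<^sup>2 + 2*u\<^sup>2"
  proof -
    have "0 \<le> (\<rho> - u)\<^sup>2" by simp
    then show ?thesis by (simp add: power2_eq_square algebra_simps)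
  qed
  finally have s: "(norm (t n))\<^sup>2 + 1 \<le> 2*u\<^sup>2 + (2*\<rho>\<^sup>2+1)" by linarith
  have "(2*\<rho>\<^sup>2+1) \<le> u\<^sup>2 * ((2*\<rho>\<^sup>2+1) / d\<^sup>2)"
  proof -
    have "d\<^sup>2 \<le> u\<^sup>2" using u assms(1) by (intro power_mono) auto
    then have "1 \<le> u\<^sup>2 / d\<^sup>2" using assms(1) by simp
    then have "(2*\<rho>\<^sup>2+1) * 1 \<le> (2*\<rho>\<^sup>2+1) * (u\<^sup>2 / d\<^sup>2)"
      by (intro mult_left_mono) (auto simp: add_nonneg_pos)
    then show ?thesis by (simp add: mult.commute)
  qed
  with s have le: "(norm (t n))\<^sup>2 + 1 \<le> u\<^sup>2 * (2 + (2*\<rho>\<^sup>2 + 1) / d\<^sup>2)" by (simp add: algebra_simps)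
  have "\<mu> n \<le> weight n * (u\<^sup>2 * (2 + (2*\<rho>\<^sup>2 + 1) / d\<^sup>2))"
    unfolding mu_eq_weight[of n] using weight_pos[of n] le by (intro mult_left_mono) auto
  then have "\<mu> n / u\<^sup>2 \<le> weight n * (u\<^sup>2 * (2 + (2*\<rho>\<^sup>2 + 1) / d\<^sup>2)) / u\<^sup>2"
    using u by (intro divide_right_mono) auto
  also have "\<dots> = weight n * (2 + (2*\<rho>\<^sup>2 + 1) / d\<^sup>2)" using u by simp
  finally show ?thesis by (simp add: u_def)
qed

definition cauchy_term :: "(nat \<Rightarrow> complex) \<Rightarrow> nat \<Rightarrow> complex \<Rightarrow> complex" where
  "cauchy_term a n z = a n * complex_of_real (sqrt (\<mu> n)) / (z - t n)"

definition cauchy_sum :: "(nat \<Rightarrow> complex) \<Rightarrow> complex \<Rightarrow> complex" where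
  "cauchy_sum a z = (\<Sum>n. cauchy_term a n z)"

lemma norm_cauchy_term: "norm (cauchy_term a n z) = norm (a n) * sqrt (\<mu> n) / norm (z - t n)"
  unfolding cauchy_term_def using mu_pos[of n] by (simp add: norm_mult norm_divide)

lemma norm_cauchy_term_le: "norm (cauchy_term a n z) \<le> ((norm (a n))\<^sup>2 + \<mu> n / (norm (z - t n))\<^sup>2) / 2"
proof -
  define x where "x = norm (a n)"
  define y where "y = sqrt (\<mu> n) / norm (z - t n)"
  have "norm (cauchy_term a n z) = x * y" unfolding norm_cauchy_term x_def y_def by simp
  also have "\<dots> \<le> (x\<^sup>2 + y\<^sup>2) / 2" using zero_le_square[of "x - y"] by (simp add: power2_eq_square algebra_simps)
  also have "y\<^sup>2 = \<mu> n / (norm (z - t n))\<^sup>2" unfolding y_def using mu_pos[of n]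
    by (simp add: power_divide)
  finally show ?thesis by (simp add: x_def)
qed

lemma cauchy_term_le_if_mu_div_dist_le:
  assumes "\<mu> n / (norm (z - t n))\<^sup>2 \<le> weight n * K"
  shows "norm (cauchy_term a n z) \<le> ((norm (a n))\<^sup>2 + weight n * K) / 2"
  using assms by (intro order_trans[OF norm_cauchy_term_le] divide_right_mono add_left_mono) auto

lemma summable_cauchy_dominant:
  assumes "summable (\<lambda>n. (norm (a n))\<^sup>2)"
  shows "summable (\<lambda>n. ((norm (a n))\<^sup>2 + weight n * K) / 2)"
  using assms summable_weight by (intro summable_divide summable_add summable_mult2)

lemma open_compl_nodes: "open (- (t ` J))"
proof (rule openI)
  fix z assume "z \<in> - t ` J"
  then obtain d where d: "d > 0" "\<forall>n\<in>J. d \<le> norm (z - t n)"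
    using nodes_bounded_away[of J z] by blast
  have "ball z d \<subseteq> - t ` J"
  proof
    fix y assume "y \<in> ball z d"
    then have "norm (z - y) < d" by (simp add: dist_norm)
    then show "y \<in> - t ` J" using d by auto
  qed
  then show "\<exists>e>0. ball z e \<subseteq> - t ` J" using d by blast
qed

lemma closed_range_t: "closed (range t)"
  using open_compl_nodes[of UNIV] by (simp add: closed_def)

lemma range_t_null_set: "range t \<in> null_sets lborel"
  by (rule countable_imp_null_set_lborel) simp

lemma cauchy_term_locally_dominated:
  assumes J: "\<And>n. n \<notin> J \<Longrightarrow> a n = 0" and z0: "z0 \<notin> t ` J"
  obtains d K where "d > 0"
    "\<And>y n. y \<in> ball z0 d \<Longrightarrow> norm (cauchy_term a n y) \<le> ((norm (a n))\<^sup>2 + weight n * K) / 2"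
proof -
  obtain d where d: "d > 0" "\<forall>n\<in>J. d \<le> norm (z0 - t n)"
    using nodes_bounded_away[of J z0] z0 by blast
  define \<rho> where "\<rho> = norm z0 + d"
  define K where "K = 2 + (2*\<rho>\<^sup>2 + 1) / (d/2)\<^sup>2"
  have "norm (cauchy_term a n y) \<le> ((norm (a n))\<^sup>2 + weight n * K) / 2" if y: "y \<in> ball z0 (d/2)" for y n
  proof (cases "n \<in> J")
    case False
    have "K \<ge> 0" unfolding K_def by (intro add_nonneg_nonneg divide_nonneg_nonneg) auto
    then show ?thesis using False J[of n] weight_pos[of n] by (simp add: cauchy_term_def)
  next
    case True
    have "norm (z0 - t n) \<le> norm (z0 - y) + norm (y - t n)" by (rule norm_diff_triangle_le) auto
    then have "d/2 \<le> norm (y - t n)" using d True y by (fastforce simp: dist_norm)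
    moreover have "norm y \<le> \<rho>"
      using norm_triangle_ineq2[of y z0] y d by (simp add: \<rho>_def dist_norm norm_minus_commute)
    ultimately have "\<mu> n / (norm (y - t n))\<^sup>2 \<le> weight n * K"
      unfolding K_def using mu_div_dist_le[of "d/2" y n \<rho>] d by simp
    then show ?thesis by (rule cauchy_term_le_if_mu_div_dist_le)
  qed
  then show ?thesis using d by (intro that[of "d/2" K]) auto
qed

context
  fixes a :: "nat \<Rightarrow> complex" and J :: "nat set"
  assumes l2: "summable (\<lambda>n. (norm (a n))\<^sup>2)" and supp: "\<And>n. n \<notin> J \<Longrightarrow> a n = 0"
begin

lemma summable_norm_cauchy_term:
  assumes "z \<notin> t ` J"
  shows "summable (\<lambda>n. norm (cauchy_term a n z))"
proof -
  obtain d K where "d > 0"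
    and dom: "\<And>y n. y \<in> ball z d \<Longrightarrow> norm (cauchy_term a n y) \<le> ((norm (a n))\<^sup>2 + weight n * K) / 2"
    using cauchy_term_locally_dominated[where a=a and J=J, OF supp assms] by blast
  then have "norm (norm (cauchy_term a n z)) \<le> ((norm (a n))\<^sup>2 + weight n * K) / 2" for n
    using dom[of z n] by simp
  then show ?thesis by (rule summable_comparison_test'[OF summable_cauchy_dominant[OF l2]])
qed

lemma summable_cauchy_term: "z \<notin> t ` J \<Longrightarrow> summable (\<lambda>n. cauchy_term a n z)"
  using summable_norm_cauchy_term by (rule summable_norm_cancel)

lemma holomorphic_cauchy_sum: "cauchy_sum a holomorphic_on (- (t ` J))"
proof -
  define f' where "f' n x = - (a n * complex_of_real (sqrt (\<mu> n))) / (x - t n)\<^sup>2" for n x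
  have der: "(cauchy_term a n has_field_derivative f' n x) (at x)" if "x \<in> - t ` J" for n x
  proof (cases "n \<in> J")
    case False
    then show ?thesis using supp[of n] by (simp add: f'_def cauchy_term_def[abs_def])
  next
    case True
    then have "x \<noteq> t n" using that by auto
    then show ?thesis unfolding cauchy_term_def[abs_def] f'_def
      by (auto intro!: derivative_eq_intros simp: power2_eq_square)
  qed
  have "\<exists>g g'. \<forall>x \<in> - t ` J. ((\<lambda>n. cauchy_term a n x) sums g x) \<and> ((\<lambda>n. f' n x) sums g' x)
      \<and> (g has_field_derivative g' x) (at x)"
  proof (rule series_and_derivative_comparison_local[OF open_compl_nodes der])
    fix x assume "x \<in> - t ` J"
    then obtain d K where "d > 0"
      "\<And>y n. y \<in> ball x d \<Longrightarrow> norm (cauchy_term a n y) \<le> ((norm (a n))\<^sup>2 + weight n * K) / 2"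
      using cauchy_term_locally_dominated[where a=a and J=J, OF supp] by blast
    then show "\<exists>d h. 0 < d \<and> summable h \<and>
        (\<forall>\<^sub>F n in sequentially. \<forall>y\<in>ball x d \<inter> - t ` J. norm (cauchy_term a n y) \<le> h n)"
      using summable_cauchy_dominant[OF l2]
      by (intro exI[of _ d] exI[of _ "\<lambda>n. ((norm (a n))\<^sup>2 + weight n * K) / 2"]) auto
  qed auto
  then obtain g g' where gg: "\<And>x. x \<in> - t ` J \<Longrightarrow> ((\<lambda>n. cauchy_term a n x) sums g x) \<and> (g has_field_derivative g' x) (at x)"
    by blast
  have "(cauchy_sum a has_field_derivative g' x) (at x)" if "x \<in> - t ` J" for x
  proof (rule has_field_derivative_transform_within_open[of g _ _ "- t ` J"])
    show "(g has_field_derivative g' x) (at x)" using gg that by blast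
  qed (use open_compl_nodes that gg in \<open>auto simp: cauchy_sum_def sums_iff\<close>)
  then show ?thesis
    using holomorphic_on_open[OF open_compl_nodes] by blast
qed

end

text \<open>At a node the value is the limit of \<open>A(z) a\<^sub>n \<mu>\<^sub>n\<^sup>1\<^sup>/\<^sup>2 / (z - t\<^sub>n)\<close>, the only singular term of \<open>A \<cdot> cauchy_sum a\<close>.\<close>
definition cdb_function :: "(nat \<Rightarrow> complex) \<Rightarrow> complex \<Rightarrow> complex" where
  "cdb_function a z = (if z \<in> range t then deriv A z * a (inv t z) * complex_of_real (sqrt (\<mu> (inv t z))) else A z * cauchy_sum a z)"

lemma cdb_function_node: "cdb_function a (t m) = deriv A (t m) * a m * complex_of_real (sqrt (\<mu> m))"
  unfolding cdb_function_def using inj_t by (simp add: inv_f_f)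

lemma cdb_function_off_nodes: "z \<notin> range t \<Longrightarrow> cdb_function a z = A z * cauchy_sum a z"
  unfolding cdb_function_def by simp

lemma cauchy_sum_remove_term:
  assumes "summable (\<lambda>n. cauchy_term a n z)"
  shows "cauchy_sum a z = cauchy_term a m z + cauchy_sum (a(m := 0)) z"
proof -
  have eq: "cauchy_term (a(m := 0)) n z = cauchy_term a n z - (if n = m then cauchy_term a n z else 0)" for n
    by (auto simp: cauchy_term_def)
  have "(\<lambda>n. cauchy_term (a(m := 0)) n z) sums (cauchy_sum a z - cauchy_term a m z)"
    unfolding eq using assms[unfolded summable_sums_iff] sums_single[of m "\<lambda>n. cauchy_term a n z"]
    by (intro sums_diff) (auto simp: cauchy_sum_def summable_sums)
  then show ?thesis by (simp add: cauchy_sum_def sums_iff)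
qed

text \<open>Near \<open>t m\<close> the singular term of the Cauchy sum is cancelled by the zero of \<open>A\<close>: there
  \<open>cdb_function a = c q + A S'\<close> with \<open>q(y) = A(y) / (y - t m)\<close> and \<open>S'\<close> the Cauchy sum without its
  \<open>m\<close>-th term.\<close>
lemma holomorphic_cdb_function_near_node:
  assumes l2: "summable (\<lambda>n. (norm (a n))\<^sup>2)"
  shows "\<exists>U. open U \<and> t m \<in> U \<and> cdb_function a holomorphic_on U"
proof -
  define a' where "a' = a(m := 0)"
  have "(norm (a' n))\<^sup>2 \<le> (norm (a n))\<^sup>2" for n by (simp add: a'_def)
  then have l2': "summable (\<lambda>n. (norm (a' n))\<^sup>2)" by (intro summable_comparison_test'[OF l2]) auto
  have supp: "\<And>n. n \<notin> - {m} \<Longrightarrow> a' n = 0" by (simp add: a'_def)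
  define U where "U = - (t ` (- {m}))"
  have U: "open U" "cauchy_sum a' holomorphic_on U"
    using open_compl_nodes holomorphic_cauchy_sum[where J="- {m}", OF l2' supp] by (auto simp: U_def)
  define q where "q = (\<lambda>z. if z = t m then deriv A (t m) else (A z - A (t m)) / (z - t m))"
  have q: "q holomorphic_on UNIV" unfolding q_def by (rule pole_lemma_open[OF A_holomorphic]) auto
  define c where "c = a m * complex_of_real (sqrt (\<mu> m))"
  have eq: "cdb_function a y = c * q y + A y * cauchy_sum a' y" if "y \<in> U" for y
  proof (cases "y = t m")
    case True
    then show ?thesis by (simp add: cdb_function_node q_def c_def A_t)
  next
    case False
    then have y: "y \<notin> range t" using that by (auto simp: U_def)
    have "summable (\<lambda>n. cauchy_term a n y)" using summable_cauchy_term[OF l2, of UNIV y] y by auto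
    then have "cdb_function a y = A y * cauchy_term a m y + A y * cauchy_sum a' y"
      using cdb_function_off_nodes[OF y] cauchy_sum_remove_term[of a y m] by (simp add: a'_def distrib_left)
    also have "A y * cauchy_term a m y = c * q y"
      using False by (simp add: cauchy_term_def q_def c_def A_t)
    finally show ?thesis .
  qed
  have "(\<lambda>y. c * q y + A y * cauchy_sum a' y) holomorphic_on U"
    using q A_holomorphic U(2) by (intro holomorphic_intros) (auto intro: holomorphic_on_subset)
  then have "cdb_function a holomorphic_on U" by (rule holomorphic_transform) (simp add: eq)
  moreover have "t m \<in> U" using inj_t by (auto simp: U_def inj_eq)
  ultimately show ?thesis using U(1) by blast
qed

lemma holomorphic_cdb_function:
  assumes l2: "summable (\<lambda>n. (norm (a n))\<^sup>2)"
  shows "cdb_function a holomorphic_on UNIV"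
proof (rule holomorphic_on_UNIV_if_local)
  fix z
  show "\<exists>U. open U \<and> z \<in> U \<and> cdb_function a holomorphic_on U"
  proof (cases "z \<in> range t")
    case False
    have "(\<lambda>z. A z * cauchy_sum a z) holomorphic_on (- range t)"
      using A_holomorphic holomorphic_cauchy_sum[OF l2, of UNIV]
      by (intro holomorphic_intros) (auto intro: holomorphic_on_subset)
    then have "cdb_function a holomorphic_on (- range t)"
      by (rule holomorphic_transform) (simp add: cdb_function_off_nodes)
    then show ?thesis using False open_compl_nodes by blast
  qed (use holomorphic_cdb_function_near_node[OF l2] in blast)
qed

lemma entire_eq_if_eq_off_nodes:
  assumes f: "f holomorphic_on UNIV" and g: "g holomorphic_on UNIV"
    and eq: "\<And>z. z \<notin> range t \<Longrightarrow> f z = g z"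
  shows "f = g"
proof
  fix z
  show "f z = g z"
  proof (cases "z \<in> range t")
    case False then show ?thesis by (rule eq)
  next
    case True
    then obtain m where m: "z = t m" by blast
    define U where "U = - (t ` (- {m}))"
    have U: "open U" using open_compl_nodes by (simp add: U_def)
    have zU: "z \<in> U" using inj_t by (auto simp: U_def m inj_eq)
    have ev: "\<forall>\<^sub>F y in at z. f y = g y"
    proof -
      have "\<forall>\<^sub>F y in at z. y \<in> U" using U zU by (rule eventually_at_in_open')
      moreover have "\<forall>\<^sub>F y in at z. y \<noteq> z" by (rule eventually_neq_at_within)
      ultimately show ?thesis
      proof eventually_elim
        case (elim y)
        then have "y \<notin> range t" by (auto simp: U_def m)
        then show ?case by (rule eq)
      qed
    qed
    have cf: "isCont f z" using f holomorphic_on_imp_continuous_on continuous_on_eq_continuous_at by blast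
    have cg: "isCont g z" using g holomorphic_on_imp_continuous_on continuous_on_eq_continuous_at by blast
    have "(f \<longlongrightarrow> f z) (at z)" using cf by (simp add: isCont_def)
    moreover have "(f \<longlongrightarrow> g z) (at z)"
    proof (rule Lim_transform_eventually)
      show "(g \<longlongrightarrow> g z) (at z)" using cg by (simp add: isCont_def)
      show "\<forall>\<^sub>F y in at z. g y = f y" using ev by (simp add: eq_commute)
    qed
    ultimately show ?thesis by (intro tendsto_unique) auto
  qed
qed

lemma cdb_repr_imp_eq_cdb_function:
  assumes f: "f holomorphic_on UNIV" and r: "cdb_repr t A \<mu> a f"
  shows "f = cdb_function a"
proof (rule entire_eq_if_eq_off_nodes[OF f])
  show "cdb_function a holomorphic_on UNIV" using r by (intro holomorphic_cdb_function) (simp add: cdb_repr_def)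
  fix z assume "z \<notin> range t"
  then show "f z = cdb_function a z" using r by (simp add: cdb_repr_def cdb_function_off_nodes cauchy_sum_def cauchy_term_def)
qed

section \<open>Counting the nodes\<close>

lemma factor_nodes_of_A:
  assumes "finite F"
  shows "\<exists>Q. Q holomorphic_on UNIV \<and> (\<forall>z. A z = Q z * (\<Prod>k\<in>F. z - t k))"
  using assms
proof (induction F rule: finite_induct)
  case empty
  then show ?case using A_holomorphic by auto
next
  case (insert k F)
  then obtain Q where Q: "Q holomorphic_on UNIV" "\<And>z. A z = Q z * (\<Prod>k\<in>F. z - t k)" by blast
  have "(\<Prod>j\<in>F. t k - t j) \<noteq> 0"
    using insert(1,2) inj_t by (auto simp: prod_zero_iff inj_eq)
  then have Qk: "Q (t k) = 0" using Q(2)[of "t k"] A_t[of k] by simp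
  define Q' where "Q' = (\<lambda>z. if z = t k then deriv Q (t k) else (Q z - Q (t k)) / (z - t k))"
  have Q'h: "Q' holomorphic_on UNIV" unfolding Q'_def by (rule pole_lemma_open[OF Q(1)]) auto
  have "Q z = Q' z * (z - t k)" for z
    by (cases "z = t k") (auto simp: Q'_def Qk)
  then have "A z = Q' z * (\<Prod>j\<in>insert k F. z - t j)" for z
    using Q(2)[of z] insert(1,2) by (simp add: mult_ac)
  then show ?case using Q'h by blast
qed

text \<open>A Jensen-type estimate: the zeros of \<open>A\<close> in the disc of radius \<open>r\<close> are divided out, and the
  quotient is estimated at \<open>0\<close> by its maximum on the circle of radius \<open>4 r\<close>, where each linear factor
  has modulus at least \<open>3 r\<close>.\<close>
lemma norm_A_0_mult_3_pow_card_le: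
  assumes r: "r > 0" and M: "\<And>z. norm z = 4 * r \<Longrightarrow> norm (A z) \<le> M"
  shows "norm (A 0) * 3 ^ card {n. norm (t n) \<le> r} \<le> M"
proof -
  define F where "F = {n. norm (t n) \<le> r}"
  define m where "m = card F"
  have fF: "finite F" unfolding F_def by (rule finite_nodes_in_disc)
  obtain Q where Q: "Q holomorphic_on UNIV" "\<And>z. A z = Q z * (\<Prod>k\<in>F. z - t k)"
    using factor_nodes_of_A[OF fF] by blast
  define B where "B = M / (3*r)^m"
  have bd: "norm (Q z) \<le> B" if z: "norm z = 4 * r" for z
  proof -
    have "3 * r \<le> norm (z - t k)" if "k \<in> F" for k
      using norm_triangle_ineq[of "z - t k" "t k"] that z by (simp add: F_def)
    then have "(\<Prod>k\<in>F. 3*r) \<le> (\<Prod>k\<in>F. norm (z - t k))"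
      using r by (intro prod_mono) auto
    then have P: "(3*r)^m \<le> norm (\<Prod>k\<in>F. z - t k)" by (simp add: m_def prod_norm)
    have "norm (Q z) * norm (\<Prod>k\<in>F. z - t k) \<le> M"
      using M[OF z] Q(2)[of z] by (simp add: norm_mult)
    moreover have "norm (Q z) * (3*r)^m \<le> norm (Q z) * norm (\<Prod>k\<in>F. z - t k)"
      using P by (intro mult_left_mono) auto
    ultimately show ?thesis unfolding B_def using r by (simp add: pos_le_divide_eq)
  qed
  have "norm ((deriv ^^ 0) Q 0) \<le> fact 0 * B / (4*r)^0"
  proof (rule Cauchy_inequality)
    show "Q holomorphic_on ball 0 (4 * r)" using Q(1) by (rule holomorphic_on_subset) auto
    show "continuous_on (cball 0 (4 * r)) Q"
      using Q(1) holomorphic_on_imp_continuous_on continuous_on_subset by blast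
    show "norm (Q x) \<le> B" if "norm (0 - x) = 4 * r" for x using bd[of x] that by simp
  qed (use r in auto)
  then have Q0: "norm (Q 0) \<le> B" by simp
  have "norm (\<Prod>k\<in>F. 0 - t k) = (\<Prod>k\<in>F. norm (0 - t k))" by (rule prod_norm[symmetric])
  also have "\<dots> = (\<Prod>k\<in>F. norm (t k))" by simp
  also have "\<dots> \<le> (\<Prod>k\<in>F. r)" by (intro prod_mono) (auto simp: F_def)
  finally have Pn: "norm (\<Prod>k\<in>F. 0 - t k) \<le> r^m" by (simp add: m_def)
  have "B \<ge> 0" using order_trans[OF norm_ge_zero bd[of "of_real (4 * r)"]] r by simp
  then have "norm (A 0) \<le> B * r^m"
    using Q(2)[of 0] Q0 Pn by (simp add: norm_mult mult_mono)
  also have "\<dots> = M / 3^m" unfolding B_def using r by (simp add: power_mult_distrib)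
  finally show ?thesis by (simp add: m_def F_def pos_le_divide_eq)
qed

lemma card_nodes_le_ln:
  assumes R0: "\<And>z. norm z > R0 \<Longrightarrow> norm (A z) \<le> exp (norm z powr \<rho>)"
    and r: "r > 0" "4 * r > R0"
  shows "real (card {n. norm (t n) \<le> r}) \<le> (4 * r) powr \<rho> + \<bar>ln (norm (A 0))\<bar>"
proof -
  define m where "m = card {n. norm (t n) \<le> r}"
  have "norm (A 0) * 3^m \<le> exp ((4*r) powr \<rho>)"
    unfolding m_def
  proof (rule norm_A_0_mult_3_pow_card_le[OF r(1)])
    show "norm (A z) \<le> exp ((4*r) powr \<rho>)" if "norm z = 4 * r" for z
      using R0[of z] r that by simp
  qed
  then have "ln (norm (A 0) * 3^m) \<le> ln (exp ((4*r) powr \<rho>))"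
    using A_0_nonzero by (subst ln_le_cancel_iff) auto
  then have "ln (norm (A 0) * 3^m) \<le> (4*r) powr \<rho>" by simp
  then have "ln (norm (A 0)) + m * ln 3 \<le> (4*r) powr \<rho>"
    using A_0_nonzero by (simp add: ln_mult ln_realpow)
  moreover have "real m * 1 \<le> real m * ln 3"
    using ln_ge_iff[of 3 1] exp_le by (intro mult_left_mono) auto
  ultimately show ?thesis unfolding m_def by linarith
qed

lemma card_nodes_polynomial_bound:
  assumes fo: "finite_order A"
  shows "\<exists>C (K::nat). C \<ge> 0 \<and> (\<forall>r\<ge>1. real (card {n. norm (t n) \<le> r}) \<le> C * r ^ K)"
proof -
  obtain \<rho> R0 where R0: "\<And>z. norm z > R0 \<Longrightarrow> norm (A z) \<le> exp (norm z powr \<rho>)"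
    using fo unfolding finite_order_def by blast
  define K where "K = nat \<lceil>max \<rho> 0\<rceil>"
  define L where "L = \<bar>ln (norm (A 0))\<bar>"
  define M0 where "M0 = real (card {n. norm (t n) \<le> R0 / 4})"
  define C where "C = 4^K + L + M0"
  have C: "C \<ge> 0" unfolding C_def L_def M0_def by simp
  have "real (card {n. norm (t n) \<le> r}) \<le> C * r ^ K" if r: "r \<ge> 1" for r
  proof (cases "4 * r > R0")
    case True
    have "(4*r) powr \<rho> \<le> (4*r) powr (real K)"
      using r unfolding K_def by (intro powr_mono) (auto, linarith)
    also have "\<dots> = 4^K * r^K" using r by (simp add: powr_realpow power_mult_distrib)
    finally have "real (card {n. norm (t n) \<le> r}) \<le> 4^K * r^K + L"
      using card_nodes_le_ln[of R0 \<rho> r, OF R0] r True unfolding L_def by simp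
    also have "\<dots> \<le> 4^K * r^K + L * r^K + M0 * r^K"
    proof -
      have "L \<le> L * r^K" using r unfolding L_def by (simp add: mult_le_cancel_left1 one_le_power)
      moreover have "0 \<le> M0 * r^K" using r unfolding M0_def by simp
      ultimately show ?thesis by linarith
    qed
    also have "\<dots> = C * r^K" by (simp add: C_def algebra_simps)
    finally show ?thesis .
  next
    case False
    have "card {n. norm (t n) \<le> r} \<le> card {n. norm (t n) \<le> R0 / 4}"
      using False by (intro card_mono finite_nodes_in_disc) auto
    then have "real (card {n. norm (t n) \<le> r}) \<le> M0" unfolding M0_def by simp
    also have "\<dots> \<le> M0 * r^K" using r unfolding M0_def by (simp add: mult_le_cancel_left1 one_le_power)
    also have "\<dots> \<le> C * r^K" using r unfolding C_def L_def by (intro mult_right_mono) auto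
    finally show ?thesis .
  qed
  then show ?thesis using C by blast
qed

lemma sum_inverse_power_nodes_le:
  assumes C: "C \<ge> 0" "\<And>r. r \<ge> 1 \<Longrightarrow> real (card {n. norm (t n) \<le> r}) \<le> C * r ^ K"
    and F: "finite F"
  shows "(\<Sum>n\<in>F. 1 / (norm (t n) + 1) ^ (K+2)) \<le> 2 * C * 2^K"
proof -
  define s where "s n = norm (t n) + 1" for n
  have s1: "s n \<ge> 1" for n by (simp add: s_def)
  define J where "J = nat \<lceil>\<Sum>n\<in>F. s n\<rceil>"
  have sJ: "s n < 2 ^ J" if "n \<in> F" for n
  proof -
    have "s n \<le> (\<Sum>n\<in>F. s n)" using F that s1 by (intro member_le_sum) (auto intro: order_trans[OF zero_le_one])
    also have "\<dots> \<le> real J" unfolding J_def by linarith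
    also have "\<dots> < 2 ^ J" by (metis less_exp of_nat_less_iff of_nat_numeral of_nat_power)
    finally show ?thesis .
  qed
  define g where "g n j = (if s n \<le> 2 ^ (j+1) then 1 / (2::real) ^ (j * (K+2)) else 0)" for n j
  have "(\<Sum>n\<in>F. 1 / (norm (t n) + 1) ^ (K+2)) \<le> (\<Sum>n\<in>F. \<Sum>j<J. g n j)"
    unfolding g_def s_def[symmetric] using s1 sJ by (intro sum_mono inverse_power_le_dyadic_sum)
  also have "\<dots> = (\<Sum>j<J. \<Sum>n\<in>F. g n j)" by (rule sum.swap)
  also have "\<dots> \<le> (\<Sum>j<J. C * 2^K * (1/4)^j)"
  proof (rule sum_mono)
    fix j
    have "(\<Sum>n\<in>F. g n j) = real (card {n\<in>F. s n \<le> 2^(j+1)}) / 2 ^ (j * (K+2))"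
      unfolding g_def using F by (simp add: sum.inter_filter[symmetric])
    also have "\<dots> \<le> real (card {n. norm (t n) \<le> 2^(j+1)}) / 2 ^ (j * (K+2))"
      by (intro divide_right_mono) (auto simp: s_def intro!: card_mono finite_nodes_in_disc)
    also have "\<dots> \<le> C * (2^(j+1))^K / 2 ^ (j * (K+2))"
      using one_le_power[of "2::real" "j+1"] by (intro divide_right_mono C(2)) auto
    also have "\<dots> = C * 2^K * (1/4)^j" by (rule dyadic_power_ratio)
    finally show "(\<Sum>n\<in>F. g n j) \<le> C * 2^K * (1/4)^j" .
  qed
  also have "\<dots> = C * 2^K * (\<Sum>j<J. (1/4::real)^j)" by (simp add: sum_distrib_left)
  also have "\<dots> \<le> C * 2^K * 2"
  proof -
    have "(\<Sum>j<J. (1/4::real)^j) = (1 - (1/4)^J) / (1 - 1/4)" by (simp add: sum_gp_strict)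
    also have "\<dots> \<le> 2" by (simp add: field_simps)
    finally show ?thesis using C(1) by (intro mult_left_mono) auto
  qed
  finally show ?thesis by (simp add: mult_ac)
qed

lemma summable_inverse_power_nodes:
  assumes "C \<ge> 0" "\<And>r. r \<ge> 1 \<Longrightarrow> real (card {n. norm (t n) \<le> r}) \<le> C * r ^ K"
  shows "summable (\<lambda>n. 1 / (norm (t n) + 1) ^ (K+2))"
  by (rule bounded_imp_summable[where B = "2 * C * 2^K"]) (use sum_inverse_power_nodes_le[OF assms] in auto)

section \<open>Polynomial growth off an exceptional set\<close>

lemma mu_div_dist_le_far:
  assumes z: "norm z \<ge> 1" and far: "1 / (norm (t n) + 1) ^ p \<le> norm (z - t n)"
  shows "\<mu> n / (norm (z - t n))\<^sup>2 \<le> weight n * (5 + (2 * norm z + 1) ^ (2*p+2))"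
proof -
  define u where "u = norm (z - t n)"
  define P where "P = 5 + (2 * norm z + 1) ^ (2*p+2)"
  have u0: "u > 0" using far unfolding u_def by (smt (verit) divide_pos_pos norm_ge_zero zero_less_power)
  have "(norm (t n))\<^sup>2 + 1 \<le> u\<^sup>2 * P"
    unfolding u_def P_def using z far norm_triangle_ineq3[of z "t n"] by (intro square_plus_one_le_far) auto
  then have "\<mu> n \<le> weight n * (u\<^sup>2 * P)" unfolding mu_eq_weight[of n]
    using weight_pos[of n] by (intro mult_left_mono) auto
  then show ?thesis using u0 unfolding u_def[symmetric] P_def[symmetric] by (simp add: divide_le_eq mult_ac)
qed

lemma norm_cauchy_sum_le:
  assumes l2: "summable (\<lambda>n. (norm (a n))\<^sup>2)" and bd: "\<And>n. \<mu> n / (norm (z - t n))\<^sup>2 \<le> weight n * P"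
  shows "norm (cauchy_sum a z) \<le> ((\<Sum>n. (norm (a n))\<^sup>2) + (\<Sum>n. weight n) * P) / 2"
proof -
  have tb: "norm (cauchy_term a n z) \<le> ((norm (a n))\<^sup>2 + weight n * P) / 2" for n
    by (rule cauchy_term_le_if_mu_div_dist_le[OF bd])
  have sb: "summable (\<lambda>n. ((norm (a n))\<^sup>2 + weight n * P) / 2)"
    by (rule summable_cauchy_dominant[OF l2])
  have sn: "summable (\<lambda>n. norm (cauchy_term a n z))"
    by (rule summable_comparison_test'[OF sb]) (use tb in auto)
  have "norm (cauchy_sum a z) \<le> (\<Sum>n. norm (cauchy_term a n z))"
    unfolding cauchy_sum_def by (rule summable_norm[OF sn])
  also have "\<dots> \<le> (\<Sum>n. ((norm (a n))\<^sup>2 + weight n * P) / 2)"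
    by (rule suminf_le[OF tb sn sb])
  also have "\<dots> = ((\<Sum>n. (norm (a n))\<^sup>2) + (\<Sum>n. weight n) * P) / 2"
    using l2 summable_weight
    by (simp add: suminf_divide suminf_add suminf_mult2 summable_add summable_mult2)
  finally show ?thesis .
qed

text \<open>The exceptional set consists of the intervals of radius \<open>(\<bar>t\<^sub>n\<bar> + 1)\<^sup>-\<^sup>p\<close> around the \<open>\<bar>t\<^sub>n\<bar>\<close>; it has
  zero linear density because finite order of \<open>A\<close> makes these radii summable for large \<open>p\<close>.\<close>
lemma cauchy_sum_growth:
  assumes fo: "finite_order A" and l2: "summable (\<lambda>n. (norm (a n))\<^sup>2)"
  obtains E N R0 where "E \<subseteq> {0<..}" "zero_linear_density E" "N > 0"
    "\<And>z. norm z > R0 \<Longrightarrow> norm z \<notin> E \<Longrightarrow> z \<notin> range t \<and> norm (cauchy_sum a z) \<le> norm z powr N"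
proof -
  obtain C K where C: "C \<ge> 0" "\<And>r. r \<ge> 1 \<Longrightarrow> real (card {n. norm (t n) \<le> r}) \<le> C * r ^ K"
    using card_nodes_polynomial_bound[OF fo] by blast
  define p where "p = K + 2"
  define \<delta> where "\<delta> n = 1 / (norm (t n) + 1) ^ p" for n
  have \<delta>pos: "\<delta> n > 0" for n unfolding \<delta>_def by (simp add: add_nonneg_pos)
  define E where "E = (\<Union>n. {norm (t n) - \<delta> n <..< norm (t n) + \<delta> n}) \<inter> {0<..}"
  have zld: "zero_linear_density E"
    unfolding E_def using \<delta>pos summable_inverse_power_nodes[OF C]
    by (intro zero_linear_density_Union_intervals) (auto simp: \<delta>_def p_def)
  define L where "L = (\<Sum>n. (norm (a n))\<^sup>2)"
  define W where "W = (\<Sum>n. weight n)"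
  have W0: "W \<ge> 0" unfolding W_def using weight_pos summable_weight by (intro suminf_nonneg) (auto intro: less_imp_le)
  have L0: "L \<ge> 0" unfolding L_def using l2 by (intro suminf_nonneg) auto
  define q where "q = 2 * p + 2"
  define R0 where "R0 = max 1 (L + 5 * W + W * 3 ^ q)"
  have "z \<notin> range t \<and> norm (cauchy_sum a z) \<le> norm z powr (real (q + 1))"
    if z: "norm z > R0" "norm z \<notin> E" for z
  proof -
    define r where "r = norm z"
    have r1: "r \<ge> 1" "r > R0" using z unfolding r_def R0_def by auto
    have far: "\<delta> n \<le> norm (z - t n)" for n
    proof -
      have "r \<notin> {norm (t n) - \<delta> n <..< norm (t n) + \<delta> n}" using z(2) r1 unfolding E_def r_def by auto
      then have "\<delta> n \<le> \<bar>r - norm (t n)\<bar>" by auto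
      also have "\<dots> \<le> norm (z - t n)" unfolding r_def by (rule norm_triangle_ineq3)
      finally show ?thesis .
    qed
    have "z \<noteq> t n" for n using far[of n] \<delta>pos[of n] by auto
    moreover have "norm (cauchy_sum a z) \<le> (L + W * (5 + (2*r+1)^q)) / 2"
      unfolding L_def W_def q_def r_def
      using far r1 by (intro norm_cauchy_sum_le[OF l2] mu_div_dist_le_far) (auto simp: \<delta>_def r_def)
    moreover have "(L + W * (5 + (2*r+1)^q)) / 2 \<le> r powr (real (q + 1))"
      using L0 W0 r1 unfolding R0_def by (intro half_affine_bound_le_powr) auto
    ultimately show ?thesis by (auto simp: r_def)
  qed
  then show ?thesis by (intro that[of E "real (q + 1)" R0]) (auto simp: E_def zld[unfolded E_def])
qed

section \<open>The majorant of the Cauchy transform\<close>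

definition abs_coeff :: "(nat \<Rightarrow> complex) \<Rightarrow> nat \<Rightarrow> real" where
  "abs_coeff a n = norm (a n) * sqrt (\<mu> n)"

definition cauchy_majorant :: "(nat \<Rightarrow> complex) \<Rightarrow> complex \<Rightarrow> ennreal" where
  "cauchy_majorant a z = (\<Sum>n. ennreal (abs_coeff a n / norm (z - t n)))"

text \<open>\<open>R\<^sup>2 * majorant_mean a R\<close> bounds the integral of the majorant over \<open>D(0, R)\<close>; the constant
  comes from \<open>nn_integral_inverse_dist_ball_le\<close>.\<close>
definition majorant_mean :: "(nat \<Rightarrow> complex) \<Rightarrow> real \<Rightarrow> real" where
  "majorant_mean a R = 15 * pi * (\<Sum>n. abs_coeff a n / (R + norm (t n)))"

lemma abs_coeff_nonneg: "abs_coeff a n \<ge> 0" unfolding abs_coeff_def using mu_pos[of n] by simp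

lemma abs_coeff_div_le: "abs_coeff a n / (1 + norm (t n)) \<le> ((norm (a n))\<^sup>2 + weight n) / 2"
proof -
  define s where "s = norm (t n)"
  have s0: "s \<ge> 0" by (simp add: s_def)
  have "sqrt (\<mu> n) = sqrt (weight n) * sqrt (s\<^sup>2 + 1)" unfolding mu_eq_weight[of n] s_def by (simp add: real_sqrt_mult)
  also have "sqrt (s\<^sup>2 + 1) \<le> 1 + s"
  proof (rule real_le_lsqrt)
    show "s\<^sup>2 + 1 \<le> (1 + s)\<^sup>2" using s0 by (simp add: power2_eq_square algebra_simps)
  qed (use s0 in auto)
  then have "sqrt (weight n) * sqrt (s\<^sup>2 + 1) \<le> sqrt (weight n) * (1 + s)"
    using weight_pos[of n] by (intro mult_left_mono) auto
  finally have "sqrt (\<mu> n) \<le> sqrt (weight n) * (1 + s)" .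
  then have "abs_coeff a n \<le> norm (a n) * (sqrt (weight n) * (1 + s))" unfolding abs_coeff_def by (intro mult_left_mono) auto
  then have "abs_coeff a n / (1 + s) \<le> norm (a n) * sqrt (weight n)" using s0 by (simp add: divide_le_eq mult_ac)
  also have "\<dots> \<le> ((norm (a n))\<^sup>2 + weight n) / 2"
  proof -
    have "0 \<le> (norm (a n) - sqrt (weight n))\<^sup>2" by simp
    then show ?thesis using weight_pos[of n] by (simp add: power2_eq_square algebra_simps)
  qed
  finally show ?thesis by (simp add: s_def)
qed

lemma norm_abs_coeff_div_le:
  assumes R: "R \<ge> 1"
  shows "norm (abs_coeff a n / (R + norm (t n))) \<le> ((norm (a n))\<^sup>2 + weight n) / 2"
proof -
  have "abs_coeff a n / (R + norm (t n)) \<le> abs_coeff a n / (1 + norm (t n))"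
    using R abs_coeff_nonneg[of a n] by (intro divide_left_mono) (auto simp: add_pos_nonneg)
  moreover have "norm (abs_coeff a n / (R + norm (t n))) = abs_coeff a n / (R + norm (t n))"
    using R abs_coeff_nonneg[of a n] by (simp add: add_nonneg_nonneg)
  ultimately show ?thesis using abs_coeff_div_le[of a n] by linarith
qed

lemma summable_abs_coeff_div:
  assumes l2: "summable (\<lambda>n. (norm (a n))\<^sup>2)" and R: "R \<ge> 1"
  shows "summable (\<lambda>n. abs_coeff a n / (R + norm (t n)))"
  using l2 summable_weight
  by (intro summable_comparison_test'[OF _ norm_abs_coeff_div_le[OF R]] summable_divide summable_add)

lemma norm_cauchy_sum_le_majorant:
  assumes l2: "summable (\<lambda>n. (norm (a n))\<^sup>2)" and z: "z \<notin> range t"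
  shows "ennreal (norm (cauchy_sum a z)) \<le> cauchy_majorant a z"
proof -
  have sn: "summable (\<lambda>n. norm (cauchy_term a n z))" using summable_norm_cauchy_term[OF l2, of UNIV z] z by auto
  have eq: "norm (cauchy_term a n z) = abs_coeff a n / norm (z - t n)" for n by (simp add: norm_cauchy_term abs_coeff_def)
  have "norm (cauchy_sum a z) \<le> (\<Sum>n. norm (cauchy_term a n z))" unfolding cauchy_sum_def by (rule summable_norm[OF sn])
  then have "ennreal (norm (cauchy_sum a z)) \<le> ennreal (\<Sum>n. norm (cauchy_term a n z))" by (rule ennreal_leI)
  also have "\<dots> = (\<Sum>n. ennreal (norm (cauchy_term a n z)))" using sn by (intro suminf_ennreal2[symmetric]) auto
  finally show ?thesis unfolding cauchy_majorant_def eq .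
qed

lemma nn_integral_majorant_ball_le:
  assumes l2: "summable (\<lambda>n. (norm (a n))\<^sup>2)" and R: "R \<ge> 1"
  shows "(\<integral>\<^sup>+ (z::complex). cauchy_majorant a z * indicator (ball 0 R) z \<partial>lborel) \<le> ennreal (R\<^sup>2 * majorant_mean a R)"
proof -
  have "(\<integral>\<^sup>+ (z::complex). cauchy_majorant a z * indicator (ball 0 R) z \<partial>lborel)
      = (\<integral>\<^sup>+ (z::complex). (\<Sum>n. ennreal (abs_coeff a n / norm (z - t n)) * indicator (ball 0 R) z) \<partial>lborel)"
    unfolding cauchy_majorant_def by simp
  also have "\<dots> = (\<Sum>n. \<integral>\<^sup>+ (z::complex). ennreal (abs_coeff a n / norm (z - t n)) * indicator (ball 0 R) z \<partial>lborel)"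
    by (rule nn_integral_suminf) measurable
  also have "\<dots> \<le> (\<Sum>n. ennreal (15 * pi * R\<^sup>2 * (abs_coeff a n / (R + norm (t n)))))"
  proof (intro suminf_le summableI)
    fix n
    have "(\<integral>\<^sup>+ (z::complex). ennreal (abs_coeff a n / norm (z - t n)) * indicator (ball 0 R) z \<partial>lborel)
        = (\<integral>\<^sup>+ (z::complex). ennreal (abs_coeff a n) * (ennreal (1 / norm (z - t n)) * indicator (ball 0 R) z) \<partial>lborel)"
    proof (intro nn_integral_cong)
      fix x :: complex
      have "ennreal (abs_coeff a n / norm (x - t n)) = ennreal (abs_coeff a n * (1 / norm (x - t n)))" by simp
      also have "\<dots> = ennreal (abs_coeff a n) * ennreal (1 / norm (x - t n))"
        using abs_coeff_nonneg[of a n] by (intro ennreal_mult) auto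
      finally show "ennreal (abs_coeff a n / norm (x - t n)) * indicator (ball 0 R) x =
         ennreal (abs_coeff a n) * (ennreal (1 / norm (x - t n)) * indicator (ball 0 R) x)" by (simp add: mult.assoc)
    qed
    also have "\<dots> = ennreal (abs_coeff a n) * (\<integral>\<^sup>+ (z::complex). ennreal (1 / norm (z - t n)) * indicator (ball 0 R) z \<partial>lborel)"
      by (rule nn_integral_cmult) measurable
    also have "\<dots> \<le> ennreal (abs_coeff a n) * ennreal (15 * pi * R\<^sup>2 / (R + norm (t n)))"
      using R by (intro mult_left_mono nn_integral_inverse_dist_ball_le) auto
    also have "\<dots> = ennreal (15 * pi * R\<^sup>2 * (abs_coeff a n / (R + norm (t n))))"
      using abs_coeff_nonneg[of a n] R by (simp add: ennreal_mult'[symmetric] ennreal_mult[symmetric] add_pos_nonneg mult_ac)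
    finally show "(\<integral>\<^sup>+ (z::complex). ennreal (abs_coeff a n / norm (z - t n)) * indicator (ball 0 R) z \<partial>lborel)
        \<le> ennreal (15 * pi * R\<^sup>2 * (abs_coeff a n / (R + norm (t n))))" .
  qed
  also have "\<dots> = ennreal (\<Sum>n. 15 * pi * R\<^sup>2 * (abs_coeff a n / (R + norm (t n))))"
    using summable_abs_coeff_div[OF l2 R] abs_coeff_nonneg R
    by (intro suminf_ennreal2 summable_mult) (auto simp: add_pos_nonneg)
  also have "(\<Sum>n. 15 * pi * R\<^sup>2 * (abs_coeff a n / (R + norm (t n)))) = R\<^sup>2 * majorant_mean a R"
    unfolding majorant_mean_def using summable_abs_coeff_div[OF l2 R] by (subst suminf_mult) (auto simp: mult_ac)
  finally show ?thesis .
qed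

lemma majorant_mean_tendsto_0:
  assumes l2: "summable (\<lambda>n. (norm (a n))\<^sup>2)"
  shows "(majorant_mean a \<longlongrightarrow> 0) at_top"
proof -
  have "((\<lambda>R. \<Sum>n. abs_coeff a n / (R + norm (t n))) \<longlongrightarrow> (\<Sum>n. (0::real))) at_top"
  proof (rule tannerys_theorem[THEN conjunct2, THEN conjunct2])
    show "((\<lambda>R. abs_coeff a k / (R + norm (t k))) \<longlongrightarrow> 0) at_top" for k
      using tendsto_const_div_add_at_top .
    show "summable (\<lambda>n. ((norm (a n))\<^sup>2 + weight n) / 2)" using l2 summable_weight by (intro summable_divide summable_add)
    have "\<forall>\<^sub>F x in at_top \<times>\<^sub>F at_top. (\<lambda>k. True) (fst x) \<and> (\<lambda>R. R \<ge> (1::real)) (snd x)"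
      by (intro eventually_prodI) (auto simp: eventually_ge_at_top)
    then show "\<forall>\<^sub>F (k, R) in at_top \<times>\<^sub>F at_top. norm (abs_coeff a k / (R + norm (t k))) \<le> ((norm (a k))\<^sup>2 + weight k) / 2"
      by eventually_elim (simp only: case_prod_beta, rule norm_abs_coeff_div_le, simp)
  qed simp
  then have "((\<lambda>R. 15 * pi * (\<Sum>n. abs_coeff a n / (R + norm (t n)))) \<longlongrightarrow> 15 * pi * 0) at_top"
    by (intro tendsto_mult tendsto_const) simp
  then show ?thesis unfolding majorant_mean_def[abs_def] by simp
qed

lemma majorant_mean_antimono:
  assumes l2: "summable (\<lambda>n. (norm (a n))\<^sup>2)" and R: "1 \<le> R1" "R1 \<le> R2"
  shows "majorant_mean a R2 \<le> majorant_mean a R1"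
proof -
  have "(\<Sum>n. abs_coeff a n / (R2 + norm (t n))) \<le> (\<Sum>n. abs_coeff a n / (R1 + norm (t n)))"
  proof (rule suminf_le)
    show "abs_coeff a n / (R2 + norm (t n)) \<le> abs_coeff a n / (R1 + norm (t n))" for n
      using R abs_coeff_nonneg[of a n] by (intro divide_left_mono) (auto simp: add_pos_nonneg)
  qed (use summable_abs_coeff_div[OF l2] R in auto)
  then show ?thesis unfolding majorant_mean_def by simp
qed

lemma majorant_mean_nonneg:
  assumes l2: "summable (\<lambda>n. (norm (a n))\<^sup>2)" and R: "1 \<le> R"
  shows "majorant_mean a R \<ge> 0"
  unfolding majorant_mean_def using summable_abs_coeff_div[OF l2 R] abs_coeff_nonneg R
  by (intro mult_nonneg_nonneg suminf_nonneg) (auto simp: add_pos_nonneg)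

text \<open>The majorant is small on most of every large disc: on \<open>D(0, R)\<close> its mean is \<open>O(majorant_mean a R)\<close>,
  so by Markov's inequality it exceeds \<open>majorant_threshold a R\<close>, which decays more slowly than
  \<open>majorant_mean a R\<close>, only on a small part of the disc.\<close>
definition majorant_threshold :: "(nat \<Rightarrow> complex) \<Rightarrow> real \<Rightarrow> real" where
  "majorant_threshold a \<rho> = sqrt (majorant_mean a (max 1 \<rho>)) + 1 / max 1 \<rho>"

definition majorant_small_set :: "(nat \<Rightarrow> complex) \<Rightarrow> complex set" where
  "majorant_small_set a = {z. cauchy_majorant a z \<le> ennreal (majorant_threshold a (norm z))} - range t"

context
  fixes a :: "nat \<Rightarrow> complex"
  assumes l2: "summable (\<lambda>n. (norm (a n))\<^sup>2)"
begin

lemma majorant_threshold_antimono: "\<rho>1 \<le> \<rho>2 \<Longrightarrow> majorant_threshold a \<rho>2 \<le> majorant_threshold a \<rho>1"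
proof -
  assume "\<rho>1 \<le> \<rho>2"
  then have "sqrt (majorant_mean a (max 1 \<rho>2)) \<le> sqrt (majorant_mean a (max 1 \<rho>1))"
    by (intro real_sqrt_le_mono majorant_mean_antimono[OF l2]) auto
  moreover have "1 / max 1 \<rho>2 \<le> 1 / max 1 \<rho>1" using \<open>\<rho>1 \<le> \<rho>2\<close> by (intro divide_left_mono) auto
  ultimately show ?thesis unfolding majorant_threshold_def by linarith
qed

lemma majorant_threshold_pos: "majorant_threshold a \<rho> > 0"
  using majorant_mean_nonneg[OF l2, of "max 1 \<rho>"] unfolding majorant_threshold_def
  by (simp add: add_nonneg_pos)

lemma majorant_threshold_tendsto_0: "(majorant_threshold a \<longlongrightarrow> 0) at_top"
proof -
  have "((\<lambda>\<rho>. sqrt (majorant_mean a \<rho>) + 1 / \<rho>) \<longlongrightarrow> sqrt 0 + 0) at_top"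
    by (intro tendsto_add tendsto_real_sqrt majorant_mean_tendsto_0[OF l2]) real_asymp
  moreover have "\<forall>\<^sub>F \<rho> in at_top. sqrt (majorant_mean a \<rho>) + 1 / \<rho> = majorant_threshold a \<rho>"
    using eventually_ge_at_top[of 1] by eventually_elim (simp add: majorant_threshold_def max_def)
  ultimately show ?thesis by (simp add: tendsto_cong)
qed

lemma majorant_small_set_borel[measurable]: "majorant_small_set a \<in> sets borel"
proof -
  have "mono (\<lambda>\<rho>. - majorant_threshold a \<rho>)"
    by (rule monoI) (use majorant_threshold_antimono in auto)
  then have "(\<lambda>\<rho>. - (- majorant_threshold a \<rho>)) \<in> borel_measurable borel"
    using borel_measurable_mono by measurable
  then have [measurable]: "majorant_threshold a \<in> borel_measurable borel" by simp
  have [measurable]: "range t \<in> sets borel" using closed_range_t by simp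
  show ?thesis unfolding majorant_small_set_def cauchy_majorant_def by measurable
qed

lemma ball_subset_majorant_small_set_Un:
  "ball 0 R \<subseteq> (majorant_small_set a \<inter> ball 0 R) \<union> range t
     \<union> {z \<in> ball 0 R. 1 \<le> ennreal (1 / majorant_threshold a R) * cauchy_majorant a z}"
proof
  fix z :: complex assume z: "z \<in> ball 0 R"
  define \<gamma> where "\<gamma> = majorant_threshold a R"
  show "z \<in> (majorant_small_set a \<inter> ball 0 R) \<union> range t
     \<union> {z \<in> ball 0 R. 1 \<le> ennreal (1 / majorant_threshold a R) * cauchy_majorant a z}"
  proof (cases "z \<in> range t \<or> 1 \<le> ennreal (1 / \<gamma>) * cauchy_majorant a z")
    case False
    moreover have "ennreal (1 / \<gamma>) * ennreal \<gamma> = 1"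
      using majorant_threshold_pos[of R] by (simp add: \<gamma>_def ennreal_mult'[symmetric])
    ultimately have "\<not> ennreal \<gamma> \<le> cauchy_majorant a z"
      by (metis mult_left_mono zero_le)
    moreover have "\<gamma> \<le> majorant_threshold a (norm z)"
      using z unfolding \<gamma>_def by (intro majorant_threshold_antimono) auto
    ultimately have "cauchy_majorant a z \<le> ennreal (majorant_threshold a (norm z))"
      by (meson ennreal_leI le_cases order_trans)
    then show ?thesis using False z by (auto simp: majorant_small_set_def)
  qed (use z in \<open>auto simp: \<gamma>_def\<close>)
qed

lemma emeasure_majorant_large_le:
  assumes R: "R \<ge> 1"
  shows "emeasure lborel {z \<in> ball 0 R. 1 \<le> ennreal (1 / majorant_threshold a R) * cauchy_majorant a z}
    \<le> ennreal (R\<^sup>2 * sqrt (majorant_mean a R))"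
proof -
  define \<gamma> where "\<gamma> = majorant_threshold a R"
  have \<gamma>: "\<gamma> > 0" "sqrt (majorant_mean a R) \<le> \<gamma>"
    using majorant_threshold_pos[of R] R by (simp_all add: \<gamma>_def majorant_threshold_def)
  have P0: "majorant_mean a R \<ge> 0" using majorant_mean_nonneg[OF l2 R] .
  have "emeasure lborel {z \<in> ball 0 R. 1 \<le> ennreal (1 / \<gamma>) * cauchy_majorant a z}
      \<le> ennreal (1 / \<gamma>) * (\<integral>\<^sup>+ z. cauchy_majorant a z * indicator (ball 0 R) z \<partial>lborel)"
    unfolding cauchy_majorant_def by (rule nn_integral_Markov_inequality) measurable
  also have "\<dots> \<le> ennreal (1 / \<gamma>) * ennreal (R\<^sup>2 * majorant_mean a R)"
    by (intro mult_left_mono nn_integral_majorant_ball_le[OF l2 R]) auto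
  also have "\<dots> = ennreal (R\<^sup>2 * (majorant_mean a R / \<gamma>))"
    using \<gamma> P0 by (simp add: ennreal_mult'[symmetric])
  also have "\<dots> \<le> ennreal (R\<^sup>2 * sqrt (majorant_mean a R))"
  proof (intro ennreal_leI mult_left_mono)
    have "majorant_mean a R = sqrt (majorant_mean a R) * sqrt (majorant_mean a R)" using P0 by simp
    also have "\<dots> \<le> sqrt (majorant_mean a R) * \<gamma>" using \<gamma> P0 by (intro mult_left_mono) auto
    finally show "majorant_mean a R / \<gamma> \<le> sqrt (majorant_mean a R)" using \<gamma> by (simp add: divide_le_eq)
  qed simp
  finally show ?thesis by (simp add: \<gamma>_def)
qed

lemma measure_majorant_small_set_ball_ge:
  assumes R: "R \<ge> 1"
  shows "pi * R\<^sup>2 - R\<^sup>2 * sqrt (majorant_mean a R) \<le> measure lborel (majorant_small_set a \<inter> ball 0 R)"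
proof -
  define \<Omega> where "\<Omega> = majorant_small_set a"
  define B where "B = {z \<in> ball 0 R. 1 \<le> ennreal (1 / majorant_threshold a R) * cauchy_majorant a z}"
  have Bb: "B \<in> sets borel" unfolding B_def cauchy_majorant_def by measurable
  have rt: "range t \<in> sets borel" using closed_range_t by simp
  have "emeasure lborel (ball (0::complex) R) \<le> emeasure lborel ((\<Omega> \<inter> ball 0 R) \<union> range t \<union> B)"
    using Bb rt ball_subset_majorant_small_set_Un by (intro emeasure_mono) (auto simp: \<Omega>_def B_def)
  also have "\<dots> \<le> emeasure lborel (\<Omega> \<inter> ball 0 R) + emeasure lborel (range t) + emeasure lborel B"
    using Bb rt by (intro order_trans[OF emeasure_subadditive] add_right_mono emeasure_subadditive)
      (auto simp: \<Omega>_def)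
  also have "emeasure lborel (range t) = 0" using range_t_null_set by auto
  also have "emeasure lborel B \<le> ennreal (R\<^sup>2 * sqrt (majorant_mean a R))"
    unfolding B_def by (rule emeasure_majorant_large_le[OF R])
  finally have ineq: "ennreal (pi * R\<^sup>2) \<le> emeasure lborel (\<Omega> \<inter> ball 0 R) + ennreal (R\<^sup>2 * sqrt (majorant_mean a R))"
    using R emeasure_ball_complex[of R 0] by simp
  have "emeasure lborel (\<Omega> \<inter> ball 0 R) \<le> emeasure lborel (ball (0::complex) R)"
    by (intro emeasure_mono) auto
  then have "emeasure lborel (\<Omega> \<inter> ball 0 R) < \<infinity>"
    using emeasure_lborel_ball_finite by (rule le_less_trans)
  then have "emeasure lborel (\<Omega> \<inter> ball 0 R) = ennreal (measure lborel (\<Omega> \<inter> ball 0 R))"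
    by (intro emeasure_eq_ennreal_measure) simp
  then have "pi * R\<^sup>2 \<le> measure lborel (\<Omega> \<inter> ball 0 R) + R\<^sup>2 * sqrt (majorant_mean a R)"
    using ineq majorant_mean_nonneg[OF l2 R] by (simp add: ennreal_plus[symmetric] del: ennreal_plus)
  then show ?thesis unfolding \<Omega>_def by linarith
qed

lemma pos_upper_area_density_majorant_small_set: "pos_upper_area_density (majorant_small_set a)"
  unfolding pos_upper_area_density_def
proof
  show "majorant_small_set a \<in> sets lebesgue" by simp
  have "((\<lambda>R. sqrt (majorant_mean a R)) \<longlongrightarrow> sqrt 0) at_top"
    by (intro tendsto_real_sqrt majorant_mean_tendsto_0[OF l2])
  then have "\<forall>\<^sub>F R in at_top. sqrt (majorant_mean a R) < pi / 2" by (rule order_tendstoD) simp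
  then have "\<forall>\<^sub>F R in at_top. ereal (pi / 2) \<le> ereal (measure lebesgue (majorant_small_set a \<inter> ball 0 R) / R\<^sup>2)"
    using eventually_ge_at_top[of 1]
  proof eventually_elim
    case (elim R)
    have "pi * R\<^sup>2 - R\<^sup>2 * sqrt (majorant_mean a R) \<le> measure lebesgue (majorant_small_set a \<inter> ball 0 R)"
      using measure_majorant_small_set_ball_ge[OF elim(2)] by simp
    moreover have "R\<^sup>2 * sqrt (majorant_mean a R) \<le> R\<^sup>2 * (pi / 2)" using elim by (intro mult_left_mono) auto
    moreover have "pi * R\<^sup>2 - R\<^sup>2 * (pi / 2) = R\<^sup>2 * (pi / 2)" by (simp add: algebra_simps)
    ultimately have "R\<^sup>2 * (pi / 2) \<le> measure lebesgue (majorant_small_set a \<inter> ball 0 R)" by linarith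
    then show ?case using elim by (simp add: le_divide_eq mult.commute)
  qed
  then have "ereal (pi / 2) \<le> Limsup at_top (\<lambda>R::real. ereal (measure lebesgue (majorant_small_set a \<inter> ball 0 R) / R\<^sup>2))"
    by (rule le_Limsup[rotated]) simp
  then show "Limsup at_top (\<lambda>R::real. ereal (measure lebesgue (majorant_small_set a \<inter> ball 0 R) / R\<^sup>2)) > 0"
    by (rule less_le_trans[rotated]) (simp add: pi_gt_zero)
qed

lemma cauchy_sum_small_on_majorant_small_set:
  assumes e: "\<epsilon> > 0"
  shows "\<exists>R. \<forall>z\<in>majorant_small_set a. norm z > R \<longrightarrow> z \<notin> range t \<and> norm (cauchy_sum a z) \<le> \<epsilon>"
proof -
  have "\<forall>\<^sub>F \<rho> in at_top. majorant_threshold a \<rho> < \<epsilon>" using majorant_threshold_tendsto_0 e by (rule order_tendstoD)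
  then obtain R where R: "\<And>\<rho>. \<rho> \<ge> R \<Longrightarrow> majorant_threshold a \<rho> < \<epsilon>" by (auto simp: eventually_at_top_linorder)
  have "z \<notin> range t \<and> norm (cauchy_sum a z) \<le> \<epsilon>" if z: "z \<in> majorant_small_set a" "norm z > R" for z
  proof -
    have zt: "z \<notin> range t" using z by (simp add: majorant_small_set_def)
    have "ennreal (norm (cauchy_sum a z)) \<le> cauchy_majorant a z" by (rule norm_cauchy_sum_le_majorant[OF l2 zt])
    also have "\<dots> \<le> ennreal (majorant_threshold a (norm z))" using z by (simp add: majorant_small_set_def)
    finally have "norm (cauchy_sum a z) \<le> majorant_threshold a (norm z)"
      using majorant_threshold_pos[of "norm z"] by (subst (asm) ennreal_le_iff) auto
    then show ?thesis using R[of "norm z"] z zt by auto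
  qed
  then show ?thesis by blast
qed

end

lemma emeasure_cauchy_sum_bounded_below_le:
  assumes l2: "summable (\<lambda>n. (norm (a n))\<^sup>2)" and \<Omega>l: "\<Omega> \<in> sets lebesgue"
    and bd: "\<And>z. z \<in> \<Omega> \<Longrightarrow> norm z \<ge> R1 \<Longrightarrow> z \<notin> range t \<Longrightarrow> norm (cauchy_sum a z) \<ge> c"
    and R: "R \<ge> 1"
  defines "X \<equiv> \<Omega> \<inter> ball 0 R - cball 0 R1 - range t"
  shows "ennreal c * emeasure lebesgue X \<le> ennreal (R\<^sup>2 * majorant_mean a R)"
proof -
  have rtl: "range t \<in> sets lebesgue" using closed_range_t by (auto intro!: sets_completionI_sets)
  have Xl: "X \<in> sets lebesgue" unfolding X_def using \<Omega>l rtl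
    by (intro sets.Diff sets.Int) (auto intro!: sets_completionI_sets)
  have "(\<integral>\<^sup>+ (z::complex). ennreal c * indicator X z \<partial>lebesgue)
      \<le> (\<integral>\<^sup>+ (z::complex). cauchy_majorant a z * indicator (ball 0 R) z \<partial>lebesgue)"
  proof (rule nn_integral_mono)
    fix z :: complex
    show "ennreal c * indicator X z \<le> cauchy_majorant a z * indicator (ball 0 R) z"
    proof (cases "z \<in> X")
      case True
      then have z: "z \<in> \<Omega>" "norm z \<ge> R1" "z \<notin> range t" "z \<in> ball 0 R" by (auto simp: X_def)
      have "ennreal c \<le> ennreal (norm (cauchy_sum a z))" using bd[OF z(1-3)] by (rule ennreal_leI)
      also have "\<dots> \<le> cauchy_majorant a z" by (rule norm_cauchy_sum_le_majorant[OF l2 z(3)])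
      finally show ?thesis using True z(4) by simp
    qed simp
  qed
  also have "\<dots> = (\<integral>\<^sup>+ (z::complex). cauchy_majorant a z * indicator (ball 0 R) z \<partial>lborel)"
    by (rule nn_integral_completion)
  also have "\<dots> \<le> ennreal (R\<^sup>2 * majorant_mean a R)" by (rule nn_integral_majorant_ball_le[OF l2 R])
  finally show ?thesis using Xl by (simp add: nn_integral_cmult_indicator)
qed

lemma measure_cauchy_sum_bounded_below_le:
  assumes l2: "summable (\<lambda>n. (norm (a n))\<^sup>2)" and \<Omega>l: "\<Omega> \<in> sets lebesgue" and c: "c > 0"
    and bd: "\<And>z. z \<in> \<Omega> \<Longrightarrow> norm z \<ge> R1 \<Longrightarrow> z \<notin> range t \<Longrightarrow> norm (cauchy_sum a z) \<ge> c"
    and R: "R \<ge> 1"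
  shows "measure lebesgue (\<Omega> \<inter> ball 0 R) \<le> R\<^sup>2 * majorant_mean a R / c + pi * (max R1 0)\<^sup>2"
proof -
  define R2 where "R2 = max R1 0"
  define X where "X = \<Omega> \<inter> ball 0 R - cball 0 R1 - range t"
  have rtl: "range t \<in> sets lebesgue" using closed_range_t by (auto intro!: sets_completionI_sets)
  have cbl: "cball (0::complex) R2 \<in> sets lebesgue" by (auto intro!: sets_completionI_sets)
  have Xl: "X \<in> sets lebesgue" unfolding X_def using \<Omega>l rtl
    by (intro sets.Diff sets.Int) (auto intro!: sets_completionI_sets)
  have "ennreal c * emeasure lebesgue X \<le> ennreal (R\<^sup>2 * majorant_mean a R)"
    unfolding X_def by (rule emeasure_cauchy_sum_bounded_below_le[OF l2 \<Omega>l bd R])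
  moreover have "emeasure lebesgue X \<le> emeasure lebesgue (ball (0::complex) R)"
    using Xl by (intro emeasure_mono) (auto simp: X_def)
  moreover have "emeasure lebesgue (ball (0::complex) R) = ennreal (pi * R\<^sup>2)"
    using R emeasure_ball_complex[of R 0] by simp
  ultimately obtain x where x: "emeasure lebesgue X = ennreal x" "x \<ge> 0"
    "ennreal c * ennreal x \<le> ennreal (R\<^sup>2 * majorant_mean a R)"
    by (metis ennreal_cases ennreal_less_top not_le top_unique)
  then have "c * x \<le> R\<^sup>2 * majorant_mean a R"
    using c majorant_mean_nonneg[OF l2 R] by (simp add: ennreal_mult[symmetric] ennreal_le_iff)
  then have xb: "x \<le> R\<^sup>2 * majorant_mean a R / c" using c by (simp add: le_divide_eq mult.commute)
  have "emeasure lebesgue (\<Omega> \<inter> ball 0 R) \<le> emeasure lebesgue (X \<union> cball 0 R2 \<union> range t)"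
    using Xl rtl cbl by (intro emeasure_mono sets.Un) (auto simp: X_def R2_def)
  also have "\<dots> \<le> emeasure lebesgue X + emeasure lebesgue (cball (0::complex) R2) + emeasure lebesgue (range t)"
    using Xl rtl cbl by (intro order_trans[OF emeasure_subadditive] add_right_mono emeasure_subadditive sets.Un) auto
  also have "emeasure lebesgue (range t) = 0"
    using closed_range_t range_t_null_set by (simp add: null_sets_def)
  also have "emeasure lebesgue (cball (0::complex) R2) = ennreal (pi * R2\<^sup>2)"
    using emeasure_cball_complex[of R2 0] by (simp add: R2_def)
  finally have "emeasure lebesgue (\<Omega> \<inter> ball 0 R) \<le> ennreal (x + pi * R2\<^sup>2)"
    using x(1,2) by (simp add: ennreal_plus)
  then have "measure lebesgue (\<Omega> \<inter> ball 0 R) \<le> x + pi * R2\<^sup>2"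
    unfolding measure_def using x(2) by (intro enn2real_leI) auto
  then show ?thesis using xb by (simp add: R2_def)
qed

lemma cauchy_sum_not_bounded_below_on_dense_set:
  assumes l2: "summable (\<lambda>n. (norm (a n))\<^sup>2)" and \<Omega>: "pos_upper_area_density \<Omega>"
    and c: "c > 0" and bd: "\<And>z. z \<in> \<Omega> \<Longrightarrow> norm z \<ge> R1 \<Longrightarrow> z \<notin> range t \<Longrightarrow> norm (cauchy_sum a z) \<ge> c"
  shows False
proof -
  define C where "C = pi * (max R1 0)\<^sup>2"
  have "Limsup at_top (\<lambda>R::real. ereal (measure lebesgue (\<Omega> \<inter> ball 0 R) / R\<^sup>2))
      \<le> Limsup at_top (\<lambda>R. ereal (majorant_mean a R / c + C / R\<^sup>2))"
  proof (rule Limsup_mono)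
    show "\<forall>\<^sub>F R in at_top. ereal (measure lebesgue (\<Omega> \<inter> ball 0 R) / R\<^sup>2) \<le> ereal (majorant_mean a R / c + C / R\<^sup>2)"
      using eventually_ge_at_top[of "1::real"]
    proof eventually_elim
      case (elim R)
      have "measure lebesgue (\<Omega> \<inter> ball 0 R) / R\<^sup>2 \<le> (R\<^sup>2 * majorant_mean a R / c + C) / R\<^sup>2"
        using measure_cauchy_sum_bounded_below_le[OF l2 _ c bd elim] \<Omega> elim
        by (intro divide_right_mono) (auto simp: C_def pos_upper_area_density_def)
      also have "\<dots> = majorant_mean a R / c + C / R\<^sup>2" using elim by (simp add: field_simps)
      finally show ?case by simp
    qed
  qed
  also have "\<dots> = ereal (0 / c + 0)"
  proof (rule lim_imp_Limsup)
    show "((\<lambda>R. ereal (majorant_mean a R / c + C / R\<^sup>2)) \<longlongrightarrow> ereal (0 / c + 0)) at_top"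
      by (intro tendsto_ereal tendsto_add tendsto_divide tendsto_const majorant_mean_tendsto_0[OF l2])
        (use c in \<open>auto, real_asymp\<close>)
  qed simp
  finally show False using \<Omega> by (auto simp: pos_upper_area_density_def zero_ereal_def[symmetric])
qed

section \<open>The characterization\<close>

lemma norm_ratio_at_node:
  assumes "f (t n) = deriv A (t n) * a n * complex_of_real (sqrt (\<mu> n))"
  shows "(norm (f (t n)))\<^sup>2 / ((norm (deriv A (t n)))\<^sup>2 * \<mu> n) = (norm (a n))\<^sup>2"
proof -
  have "(norm (f (t n)))\<^sup>2 = (norm (deriv A (t n)))\<^sup>2 * (norm (a n))\<^sup>2 * \<mu> n"
    using assms mu_pos[of n] by (simp add: norm_mult power_mult_distrib)
  then show ?thesis using deriv_A_t_nonzero[of n] mu_pos[of n] by simp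
qed

lemma cdb_repr_at_node:
  assumes "f holomorphic_on UNIV" "cdb_repr t A \<mu> a f"
  shows "f (t n) = deriv A (t n) * a n * complex_of_real (sqrt (\<mu> n))"
  using cdb_repr_imp_eq_cdb_function[OF assms] cdb_function_node by simp

lemma cdb_repr_norm_eq:
  assumes "f holomorphic_on UNIV" "cdb_repr t A \<mu> a f"
  shows "(\<Sum>n. (norm (a n))\<^sup>2) = (\<Sum>n. (norm (f (t n)))\<^sup>2 / ((norm (deriv A (t n)))\<^sup>2 * \<mu> n))"
  using norm_ratio_at_node[where f=f and a=a, OF cdb_repr_at_node[OF assms]] by simp

lemma cdb_function_polynomial_growth:
  assumes fo: "finite_order A" and l2: "summable (\<lambda>n. (norm (a n))\<^sup>2)"
  shows "\<exists>E N R0. E \<subseteq> {0<..} \<and> zero_linear_density E \<and> N > 0 \<and>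
           (\<forall>z. norm z > R0 \<and> norm z \<notin> E \<longrightarrow> norm (cdb_function a z) \<le> norm z powr N * norm (A z))"
proof -
  obtain E N R0 where E: "E \<subseteq> {0<..}" "zero_linear_density E" "N > 0"
    and bd: "\<And>z. norm z > R0 \<Longrightarrow> norm z \<notin> E \<Longrightarrow> z \<notin> range t \<and> norm (cauchy_sum a z) \<le> norm z powr N"
    using cauchy_sum_growth[OF fo l2] by blast
  have "norm (cdb_function a z) \<le> norm z powr N * norm (A z)" if "norm z > R0" "norm z \<notin> E" for z
  proof -
    have "norm (cdb_function a z) = norm (A z) * norm (cauchy_sum a z)"
      using bd[OF that] by (simp add: cdb_function_off_nodes norm_mult)
    also have "\<dots> \<le> norm (A z) * norm z powr N" using bd[OF that] by (intro mult_left_mono) auto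
    finally show ?thesis by (simp add: mult.commute)
  qed
  then show ?thesis using E by blast
qed

lemma cdb_function_small_on_dense_set:
  assumes l2: "summable (\<lambda>n. (norm (a n))\<^sup>2)"
  shows "\<exists>\<Omega>. pos_upper_area_density \<Omega> \<and>
           (\<forall>\<epsilon>>0. \<exists>R. \<forall>z\<in>\<Omega>. norm z > R \<longrightarrow> norm (cdb_function a z) \<le> \<epsilon> * norm (A z))"
proof (intro exI[of _ "majorant_small_set a"] conjI allI impI)
  show "pos_upper_area_density (majorant_small_set a)"
    by (rule pos_upper_area_density_majorant_small_set[OF l2])
  fix \<epsilon> :: real assume "\<epsilon> > 0"
  then obtain R where R: "\<And>z. z \<in> majorant_small_set a \<Longrightarrow> norm z > R \<Longrightarrow> z \<notin> range t \<and> norm (cauchy_sum a z) \<le> \<epsilon>"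
    using cauchy_sum_small_on_majorant_small_set[OF l2] by blast
  have "norm (cdb_function a z) \<le> \<epsilon> * norm (A z)" if "z \<in> majorant_small_set a" "norm z > R" for z
  proof -
    have "norm (cdb_function a z) = norm (A z) * norm (cauchy_sum a z)"
      using R[OF that] by (simp add: cdb_function_off_nodes norm_mult)
    also have "\<dots> \<le> norm (A z) * \<epsilon>" using R[OF that] by (intro mult_left_mono) auto
    finally show ?thesis by (simp add: mult.commute)
  qed
  then show "\<exists>R. \<forall>z\<in>majorant_small_set a. norm z > R \<longrightarrow> norm (cdb_function a z) \<le> \<epsilon> * norm (A z)"
    by blast
qed

lemma cdb_space_imp_conditions:
  assumes fo: "finite_order A" and f: "f \<in> cdb_space t A \<mu>"
  shows "summable (\<lambda>n. (norm (f (t n)))\<^sup>2 / ((norm (deriv A (t n)))\<^sup>2 * \<mu> n)) \<and>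
           (\<exists>E N R0. E \<subseteq> {0<..} \<and> zero_linear_density E \<and> N > 0 \<and>
              (\<forall>z. norm z > R0 \<and> norm z \<notin> E \<longrightarrow> norm (f z) \<le> norm z powr N * norm (A z))) \<and>
           (\<exists>\<Omega>. pos_upper_area_density \<Omega> \<and>
              (\<forall>\<epsilon>>0. \<exists>R. \<forall>z\<in>\<Omega>. norm z > R \<longrightarrow> norm (f z) \<le> \<epsilon> * norm (A z)))"
proof -
  obtain a where fh: "f holomorphic_on UNIV" and r: "cdb_repr t A \<mu> a f"
    using f by (auto simp: cdb_space_def)
  have l2: "summable (\<lambda>n. (norm (a n))\<^sup>2)" using r by (simp add: cdb_repr_def)
  moreover have "f = cdb_function a" by (rule cdb_repr_imp_eq_cdb_function[OF fh r])
  moreover have "summable (\<lambda>n. (norm (f (t n)))\<^sup>2 / ((norm (deriv A (t n)))\<^sup>2 * \<mu> n))"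
    using l2 by (simp only: norm_ratio_at_node[where f=f and a=a, OF cdb_repr_at_node[OF fh r]])
  ultimately show ?thesis
    using cdb_function_polynomial_growth[OF fo l2] cdb_function_small_on_dense_set[OF l2] by (simp only:)
qed

text \<open>\<open>G\<close> stands for the remainder \<open>(f - g) / A\<close>, where \<open>g\<close> interpolates \<open>f\<close> on the nodes.\<close>
lemma remainder_polynomial:
  assumes fo: "finite_order A" and l2: "summable (\<lambda>n. (norm (a n))\<^sup>2)"
    and G: "G holomorphic_on UNIV" and GS: "\<And>z. z \<notin> range t \<Longrightarrow> G z = f z / A z - cauchy_sum a z"
    and E1: "zero_linear_density E1"
    and f: "\<And>z. norm z > R1 \<Longrightarrow> norm z \<notin> E1 \<Longrightarrow> norm (f z) \<le> norm z powr N1 * norm (A z)"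
  obtains n where "\<And>\<xi>. G \<xi> = (\<Sum>k\<le>n. (deriv ^^ k) G 0 / fact k * \<xi> ^ k)"
proof -
  obtain E2 N2 R2 where "E2 \<subseteq> {0<..}" "zero_linear_density E2" "N2 > 0"
    and S: "\<And>z. norm z > R2 \<Longrightarrow> norm z \<notin> E2 \<Longrightarrow> z \<notin> range t \<and> norm (cauchy_sum a z) \<le> norm z powr N2"
    using cauchy_sum_growth[OF fo l2] by blast
  note E2 = \<open>zero_linear_density E2\<close> S
  define n where "n = nat \<lceil>max N1 N2\<rceil>"
  have circ: "\<exists>r\<ge>R. r > 0 \<and> (\<forall>z. norm z = r \<longrightarrow> norm (G z) \<le> 2 * r ^ n)" for R
  proof -
    obtain r where r: "r > max R (max R1 (max R2 1))" "r \<notin> E1" "r \<notin> E2"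
      using zero_linear_density_avoid[OF E1 E2(1)] by blast
    have pw: "r powr N \<le> r ^ n" if "N \<le> max N1 N2" for N
    proof -
      have "r powr N \<le> r powr (real n)" using r that unfolding n_def by (intro powr_mono) (auto, linarith)
      also have "\<dots> = r ^ n" using r by (simp add: powr_realpow)
      finally show ?thesis .
    qed
    have "norm (G z) \<le> 2 * r ^ n" if z: "norm z = r" for z
    proof -
      have zt: "z \<notin> range t" and Sb: "norm (cauchy_sum a z) \<le> r powr N2" using E2(2)[of z] z r by auto
      have Az: "A z \<noteq> 0" using zt A_zero_iff by auto
      have "norm (f z) \<le> r powr N1 * norm (A z)" using f[of z] z r by auto
      then have "norm (f z / A z) \<le> r powr N1" using Az by (simp add: norm_divide divide_le_eq)
      then have "norm (G z) \<le> r powr N1 + r powr N2"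
        unfolding GS[OF zt] using Sb norm_triangle_ineq4[of "f z / A z" "cauchy_sum a z"] by linarith
      then show ?thesis using pw[of N1] pw[of N2] by auto
    qed
    then show ?thesis using r by (intro exI[of _ r]) auto
  qed
  have "G \<xi> = (\<Sum>k\<le>n. (deriv ^^ k) G 0 / fact k * \<xi> ^ k)" for \<xi>
    by (rule entire_polynomial_if_bounded_on_circles[OF G _ circ]) simp
  then show ?thesis by (rule that)
qed

lemma remainder_eq_0:
  assumes l2: "summable (\<lambda>n. (norm (a n))\<^sup>2)"
    and G: "\<And>\<xi>. G \<xi> = (\<Sum>k\<le>n. c k * \<xi> ^ k)" and GS: "\<And>z. z \<notin> range t \<Longrightarrow> G z = f z / A z - cauchy_sum a z"
    and \<Omega>: "pos_upper_area_density \<Omega>"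
    and f: "\<And>\<epsilon>. \<epsilon> > 0 \<Longrightarrow> \<exists>R. \<forall>z\<in>\<Omega>. norm z > R \<longrightarrow> norm (f z) \<le> \<epsilon> * norm (A z)"
  shows "G z = 0"
proof -
  have "c k = 0" if kn: "k \<le> n" for k
  proof (rule ccontr)
    assume "c k \<noteq> 0"
    then obtain \<delta> Rp where \<delta>: "\<delta> > 0" "\<And>z. norm z \<ge> Rp \<Longrightarrow> norm (\<Sum>k\<le>n. c k * z ^ k) \<ge> \<delta>"
      using polynomial_bounded_below_at_infinity[OF _ kn] by blast
    obtain Re where Re: "\<And>z. z \<in> \<Omega> \<Longrightarrow> norm z > Re \<Longrightarrow> norm (f z) \<le> \<delta>/2 * norm (A z)"
      using f[of "\<delta>/2"] \<delta> by auto
    show False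
    proof (rule cauchy_sum_not_bounded_below_on_dense_set[OF l2 \<Omega>, of "\<delta>/2" "max Rp (Re + 1)"])
      show "0 < \<delta>/2" using \<delta> by simp
      fix z :: complex assume z: "z \<in> \<Omega>" "max Rp (Re + 1) \<le> norm z" "z \<notin> range t"
      have Az: "A z \<noteq> 0" using z A_zero_iff by auto
      have "norm (f z) \<le> \<delta>/2 * norm (A z)" using Re[of z] z by auto
      then have "norm (f z / A z) \<le> \<delta>/2" using Az by (simp add: norm_divide divide_le_eq)
      moreover have "norm (G z) \<ge> \<delta>" unfolding G using \<delta>(2)[of z] z by auto
      moreover have "norm (G z) \<le> norm (f z / A z) + norm (cauchy_sum a z)"
        unfolding GS[OF z(3)] by (rule norm_triangle_ineq4)
      ultimately show "\<delta>/2 \<le> norm (cauchy_sum a z)" by linarith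
    qed
  qed
  then show ?thesis unfolding G by simp
qed

lemma conditions_imp_cdb_space:
  assumes fo: "finite_order A" and fh: "f holomorphic_on UNIV"
    and H1: "summable (\<lambda>n. (norm (f (t n)))\<^sup>2 / ((norm (deriv A (t n)))\<^sup>2 * \<mu> n))"
    and H2: "\<exists>E N R0. E \<subseteq> {0<..} \<and> zero_linear_density E \<and> N > 0 \<and>
              (\<forall>z. norm z > R0 \<and> norm z \<notin> E \<longrightarrow> norm (f z) \<le> norm z powr N * norm (A z))"
    and H3: "\<exists>\<Omega>. pos_upper_area_density \<Omega> \<and>
              (\<forall>\<epsilon>>0. \<exists>R. \<forall>z\<in>\<Omega>. norm z > R \<longrightarrow> norm (f z) \<le> \<epsilon> * norm (A z))"
  shows "f \<in> cdb_space t A \<mu>"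
proof -
  define a where "a n = f (t n) / (deriv A (t n) * complex_of_real (sqrt (\<mu> n)))" for n
  have ft: "f (t n) = deriv A (t n) * a n * complex_of_real (sqrt (\<mu> n))" for n
    unfolding a_def using deriv_A_t_nonzero[of n] mu_pos[of n] by simp
  have l2: "summable (\<lambda>n. (norm (a n))\<^sup>2)" using H1 by (simp add: norm_ratio_at_node[where f=f and a=a, OF ft])
  define F where "F z = f z - cdb_function a z" for z
  have Fh: "F holomorphic_on UNIV" unfolding F_def[abs_def] using fh holomorphic_cdb_function[OF l2]
    by (intro holomorphic_intros)
  define G where "G = (\<lambda>z. if A z = 0 then deriv F z / deriv A z else F z / A z)"
  have Gh: "G holomorphic_on UNIV" unfolding G_def
    by (rule holomorphic_quotient_at_simple_zeros[OF Fh A_holomorphic])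
      (auto simp: A_zero_iff F_def cdb_function_node ft deriv_A_t_nonzero)
  have GS: "G z = f z / A z - cauchy_sum a z" if z: "z \<notin> range t" for z
    using z A_zero_iff[of z] by (simp add: G_def F_def cdb_function_off_nodes diff_divide_distrib)
  obtain E1 N1 R1 where E1: "zero_linear_density E1"
    "\<And>z. norm z > R1 \<Longrightarrow> norm z \<notin> E1 \<Longrightarrow> norm (f z) \<le> norm z powr N1 * norm (A z)"
    using H2 by blast
  obtain n where Gpoly: "\<And>\<xi>. G \<xi> = (\<Sum>k\<le>n. (deriv ^^ k) G 0 / fact k * \<xi> ^ k)"
    using remainder_polynomial[OF fo l2 Gh GS E1] by blast
  obtain \<Omega> where \<Omega>: "pos_upper_area_density \<Omega>"
    "\<And>\<epsilon>. \<epsilon> > 0 \<Longrightarrow> \<exists>R. \<forall>z\<in>\<Omega>. norm z > R \<longrightarrow> norm (f z) \<le> \<epsilon> * norm (A z)"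
    using H3 by blast
  have G0: "G z = 0" for z
    by (rule remainder_eq_0[OF l2 Gpoly GS \<Omega>])
  have "f z = cdb_function a z" if "z \<notin> range t" for z
    using G0[of z] that A_zero_iff[of z] by (simp add: G_def F_def)
  then have "f = cdb_function a"
    by (rule entire_eq_if_eq_off_nodes[OF fh holomorphic_cdb_function[OF l2]])
  moreover have "cdb_repr t A \<mu> a (cdb_function a)"
    using l2 summable_cauchy_term[OF l2, of UNIV]
    by (auto simp: cdb_repr_def cdb_function_off_nodes cauchy_sum_def cauchy_term_def)
  ultimately show ?thesis using fh by (auto simp: cdb_space_def)
qed

end

theorem theorem2p6:
  fixes t :: "nat \<Rightarrow> complex" and A f :: "complex \<Rightarrow> complex" and \<mu> :: "nat \<Rightarrow> real"
  assumes "cdb_data t A \<mu>" and "finite_order A" and "f holomorphic_on UNIV"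
  shows "(f \<in> cdb_space t A \<mu> \<longleftrightarrow>
           summable (\<lambda>n. (norm (f (t n)))\<^sup>2 / ((norm (deriv A (t n)))\<^sup>2 * \<mu> n)) \<and>
           (\<exists>E N R0. E \<subseteq> {0<..} \<and> zero_linear_density E \<and> N > 0 \<and>
              (\<forall>z. norm z > R0 \<and> norm z \<notin> E \<longrightarrow> norm (f z) \<le> norm z powr N * norm (A z))) \<and>
           (\<exists>\<Omega>. pos_upper_area_density \<Omega> \<and>
              (\<forall>\<epsilon>>0. \<exists>R. \<forall>z\<in>\<Omega>. norm z > R \<longrightarrow> norm (f z) \<le> \<epsilon> * norm (A z))))
         \<and> (\<forall>a. f \<in> cdb_space t A \<mu> \<and> cdb_repr t A \<mu> a f \<longrightarrow>
              (\<Sum>n. (norm (a n))\<^sup>2) = (\<Sum>n. (norm (f (t n)))\<^sup>2 / ((norm (deriv A (t n)))\<^sup>2 * \<mu> n)))"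
proof -
  interpret cdb t A \<mu> by (rule cdb.intro) (rule assms(1))
  show ?thesis
    using cdb_space_imp_conditions[OF assms(2)] conditions_imp_cdb_space[OF assms(2,3)]
      cdb_repr_norm_eq[OF assms(3)]
    by (intro conjI iffI allI impI) auto
qed

end
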